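(* (1) For each $f\in\mathcal A_C$, the map $\Phi_f:\mathcal{BV}\to C^0(\overline{\mathbb R})$, $\Phi_f[g]=f*g$, is a bounded linear operator (with $\mathcal{BV}$ normed by $\|\cdot\|_{\mathcal{BV}}$ and $C^0(\overline{\mathbb R})$ by $\|\cdot\|_\infty$) with $\|\Phi_f\|\le\|f\|$, and there exists a nonzero $f\in\mathcal A_C$ with $\|\Phi_f\|=\|f\|$. (2) For each $g\in\mathcal{BV}$, the map $\Psi_g:\mathcal A_C\to C^0(\overline{\mathbb R})$, $\Psi_g[f]=f*g$, is a bounded linear operator (with $\mathcal A_C$ normed by the Alexiewicz norm) with $\|\Psi_g\|\le\|g\|_{\mathcal{BV}}$, and there exists a nonzero $g\in\mathcal{BV}$ with $\|\Psi_g\|=\|g\|_{\mathcal{BV}}$.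
   Context: Notation: $\mathcal D=C_c^\infty(\mathbb R)$, $\mathcal D'$ the Schwartz distributions; derivatives of distributions are distributional derivatives. $\overline{\mathbb R}=[-\infty,\infty]$, $F(\pm\infty)=\lim_{x\to\pm\infty}F(x)$. $C^0(\overline{\mathbb R})$ is the set of continuous $F:\mathbb R\to\mathbb R$ with finite limits at $\pm\infty$, normed by $\|F\|_\infty=\sup_{\mathbb R}|F|$. $\mathcal B_C=\{F\in C^0(\overline{\mathbb R}):F(-\infty)=0\}$. $\mathcal A_C=\{f\in\mathcal D': f=F' \text{ for some } F\in\mathcal B_C\}$; the primitive $F\in\mathcal B_C$ is unique, and $\int_a^bf=F(b)-F(a)$ for $a,b\in\overline{\mathbb R}$. The Alexiewicz norm is $\|f\|=\sup_I|\int_If|$ over all intervals $I\subset\mathbb R$. $\mathcal{BV}$ is the set of $g:\mathbb R\to\mathbb R$ with finite variation $Vg=\sup\sum_i|g(x_i)-g(y_i)|$ (supremum over finite families of disjoint intervals $(x_i,y_i)$), with norm $\|g\|_{\mathcal{BV}}=|g(-\infty)|+Vg$. For $h\in\mathcal A_C$ with primitive $H$ and $g\in\mathcal{BV}$, $\int_{-\infty}^\infty hg=H(\infty)g(\infty)-\int_{-\infty}^\infty H\,dg$ (Henstock–Stieltjes integral). For $f\in\mathcal A_C$ with primitive $F$ and $x\in\mathbb R$, $f(x-\cdot)$ is the element of $\mathcal A_C$ with primitive $y\mapsto F(\infty)-F(x-y)$, and $f*g(x)=\int_{-\infty}^\infty f(x-y)g(y)\,dy$ is the product integral of $f(x-\cdot)$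 and $g$. (It is known that $f*g\in C^0(\overline{\mathbb R})$.) *)

theory Defs
  imports "HOL-Analysis.Analysis"
begin

text \<open>Elements f of A_C are represented by their (unique) primitives F in B_C.\<close>

definition B_C :: "(real \<Rightarrow> real) set" where
  "B_C = {F. continuous_on UNIV F \<and> (\<exists>L. (F \<longlongrightarrow> L) at_top) \<and> (F \<longlongrightarrow> 0) at_bot}"

definition C0bar :: "(real \<Rightarrow> real) set" where
  "C0bar = {F. continuous_on UNIV F \<and> (\<exists>L. (F \<longlongrightarrow> L) at_top) \<and> (\<exists>L. (F \<longlongrightarrow> L) at_bot)}"

definition at_pinf :: "(real \<Rightarrow> real) \<Rightarrow> real" where
  "at_pinf F = Lim at_top F"

definition at_minf :: "(real \<Rightarrow> real) \<Rightarrow> real" where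
  "at_minf F = Lim at_bot F"

definition supnorm :: "(real \<Rightarrow> real) \<Rightarrow> real" where
  "supnorm F = Sup (range (\<lambda>x. \<bar>F x\<bar>))"

text \<open>Alexiewicz norm of f = F', sup over intervals of |int_I f| = |F b - F a|.\<close>
definition alex :: "(real \<Rightarrow> real) \<Rightarrow> real" where
  "alex F = Sup {\<bar>F b - F a\<bar> | a b. a \<le> b}"

definition var_sums :: "(real \<Rightarrow> real) \<Rightarrow> real set" where
  "var_sums g = {(\<Sum>i<n. \<bar>g (x i) - g (y i)\<bar>) | (n::nat) (x::nat\<Rightarrow>real) (y::nat\<Rightarrow>real).
      (\<forall>i<n. x i < y i) \<and>
      (\<forall>i<n. \<forall>j<n. i \<noteq> j \<longrightarrow> {x i<..<y i} \<inter> {x j<..<y j} = {})}"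

definition BV :: "(real \<Rightarrow> real) set" where
  "BV = {g. bdd_above (var_sums g)}"

definition variation :: "(real \<Rightarrow> real) \<Rightarrow> real" where
  "variation g = Sup (var_sums g)"

definition bvnorm :: "(real \<Rightarrow> real) \<Rightarrow> real" where
  "bvnorm g = \<bar>at_minf g\<bar> + variation g"

definition hs_has_integral_on :: "(real \<Rightarrow> real) \<Rightarrow> (real \<Rightarrow> real) \<Rightarrow> real \<Rightarrow> real \<Rightarrow> real \<Rightarrow> bool" where
  "hs_has_integral_on H g I a b \<longleftrightarrow>
     (\<forall>e>0. \<exists>\<gamma>. gauge \<gamma> \<and>
        (\<forall>p. p tagged_division_of {a..b} \<and> \<gamma> fine p \<longrightarrow>
           \<bar>(\<Sum>(t,K)\<in>p. H t * (g (Sup K) - g (Inf K))) - I\<bar> < e))"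

definition hs_has_integral :: "(real \<Rightarrow> real) \<Rightarrow> (real \<Rightarrow> real) \<Rightarrow> real \<Rightarrow> bool" where
  "hs_has_integral H g I \<longleftrightarrow>
     (\<exists>J. (\<forall>a b. a \<le> b \<longrightarrow> hs_has_integral_on H g (J a b) a b) \<and>
          ((\<lambda>(a,b). J a b) \<longlongrightarrow> I) (at_bot \<times>\<^sub>F at_top))"

definition hs_integral :: "(real \<Rightarrow> real) \<Rightarrow> (real \<Rightarrow> real) \<Rightarrow> real" where
  "hs_integral H g = (THE I. hs_has_integral H g I)"

text \<open>Convolution f*g (f given by its primitive F): the product integral of f(x - .),
  whose primitive is y \<mapsto> F(\<infinity>) - F(x - y), with g.\<close>
definition conv :: "(real \<Rightarrow> real) \<Rightarrow> (real \<Rightarrow> real) \<Rightarrow> real \<Rightarrow> real" where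
  "conv F g x = (let H = (\<lambda>y. at_pinf F - F (x - y))
                 in at_pinf H * at_pinf g - hs_integral H g)"

definition opnorm_Phi :: "(real \<Rightarrow> real) \<Rightarrow> real" where
  "opnorm_Phi F = Sup {supnorm (conv F g) | g. g \<in> BV \<and> bvnorm g \<le> 1}"

definition opnorm_Psi :: "(real \<Rightarrow> real) \<Rightarrow> real" where
  "opnorm_Psi g = Sup {supnorm (conv F g) | F. F \<in> B_C \<and> alex F \<le> 1}"

end

theory Submission
  imports Defs
begin

text \<open>
  Integrating by parts, \<open>f * g (x) = F(\<infinity>) g(-\<infinity>) + \<integral> F (x - y) dg(y)\<close> (lemma \<open>conv_eq\<close>), so
  everything rests on the Henstock--Stieltjes integral \<open>\<integral> H dg\<close> of a bounded continuous \<open>H\<close>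
  against \<open>g \<in> BV\<close>, which is developed first:
  \<^item> sums of increments of \<open>g\<close> over disjoint intervals are bounded by the variation, and are
    small outside a compact window (\<open>BV_tail\<close>), so \<open>g\<close> has limits at \<open>\<plusminus>\<infinity>\<close>;
  \<^item> Stieltjes sums over fine tagged divisions satisfy a Cauchy criterion (via common
    refinements) and the bounds \<open>sup |H| \<cdot> V g\<close> and a split version separating a window;
  \<^item> hence the integral on \<open>[a, b]\<close> exists, is additive, linear and bounded, and over the line
    it is the limit of windows, with the same properties, \<open>\<integral> 1 dg = g(\<infinity>) - g(-\<infinity>)\<close> and a
    dominated convergence principle.
  Then \<open>f * g\<close> is uniformly continuous with limits at \<open>\<plusminus>\<infinity>\<close>, bilinear, and bounded by
  \<open>\<parallel>f\<parallel> \<parallel>g\<parallel>\<^sub>B\<^sub>V\<close>; the ramp \<open>F = max 0 (min 1 \<cdot>)\<close> convolved with \<open>g = 1\<close> shows that both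
  operator norm bounds are attained.
\<close>

lemma real_cauchy_limit:
  fixes f :: "'a \<Rightarrow> real"
  assumes "\<And>e. e > 0 \<Longrightarrow> \<exists>P. eventually P F \<and> (\<forall>x y. P x \<and> P y \<longrightarrow> \<bar>f x - f y\<bar> \<le> e)"
  shows "\<exists>L. (f \<longlongrightarrow> L) F"
proof -
  have "cauchy_filter (filtermap f F)"
    unfolding cauchy_filter_metric_filtermap
  proof (intro allI impI)
    fix e :: real assume "e > 0"
    then obtain P where P: "eventually P F" "\<forall>x y. P x \<and> P y \<longrightarrow> \<bar>f x - f y\<bar> \<le> e / 2"
      using assms[of "e / 2"] by auto
    have "\<forall>x y. P x \<and> P y \<longrightarrow> dist (f x) (f y) < e"
      using P(2) \<open>e > 0\<close> by (force simp: dist_real_def)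
    then show "\<exists>P. eventually P F \<and> (\<forall>x y. P x \<and> P y \<longrightarrow> dist (f x) (f y) < e)"
      using P(1) by blast
  qed
  then show ?thesis
    using cauchy_filter_convergent by (auto simp: convergent_filter_iff filterlim_def)
qed

text \<open>The increment of \<open>g\<close> over a compact interval \<open>K\<close> (zero for \<open>K = {}\<close>); it is the
  weight a Stieltjes sum attaches to a cell of a division.\<close>
definition incr :: "(real \<Rightarrow> real) \<Rightarrow> real set \<Rightarrow> real" where
  "incr g K = (if K = {} then 0 else g (Sup K) - g (Inf K))"

lemma incr_ivl: "c \<le> d \<Longrightarrow> incr g {c..d} = g d - g c"
  by (simp add: incr_def)

lemma incr_degenerate: "d \<le> c \<Longrightarrow> incr g {c..d} = 0"
  by (cases "c = d") (auto simp: incr_def)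

lemma incr_division:
  assumes "D division_of {u..v}"
  shows "sum (incr g) D = incr g {u..v}"
proof -
  interpret operative_real plus 0 "incr g"
    rewrites "comm_monoid_set.F (+) 0 = sum"
  proof -
    show "operative_real (+) 0 (incr g)"
    proof
      show "incr g {a..b} = 0" if "b \<le> a" for a b
        using that by (rule incr_degenerate)
      show "incr g {a..c} + incr g {c..b} = incr g {a..b}" if "a < c" "c < b" for a b c
        using that by (simp add: incr_def)
    qed
  qed (simp add: sum_def)
  show ?thesis using division[of D u v] assms by simp
qed

text \<open>A finite family of pairwise disjoint nonempty open intervals \<open>]x i, y i[\<close>; the variation of
  \<open>g\<close> bounds the sum of \<open>|g (y i) - g (x i)|\<close> over any such family, whatever its index type.\<close>
definition disjoint_ivls :: "'i set \<Rightarrow> ('i \<Rightarrow> real) \<Rightarrow> ('i \<Rightarrow> real) \<Rightarrow> bool" where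
  "disjoint_ivls A x y \<longleftrightarrow> finite A \<and> (\<forall>i\<in>A. x i < y i) \<and>
     (\<forall>i\<in>A. \<forall>j\<in>A. i \<noteq> j \<longrightarrow> {x i<..<y i} \<inter> {x j<..<y j} = {})"

lemma var_sums_zero: "0 \<in> var_sums g"
  unfolding var_sums_def by (rule CollectI, rule exI[of _ 0]) auto

lemma variation_upper: "g \<in> BV \<Longrightarrow> s \<in> var_sums g \<Longrightarrow> s \<le> variation g"
  unfolding variation_def BV_def by (rule cSup_upper) auto

lemma variation_nonneg: "g \<in> BV \<Longrightarrow> 0 \<le> variation g"
  using variation_upper var_sums_zero by blast

text \<open>Reindexing a family by \<open>{..<card A}\<close> exhibits its sum as a variation sum.\<close>
lemma disjoint_ivls_le_variation:
  assumes g: "g \<in> BV" and A: "disjoint_ivls A x y"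
  shows "(\<Sum>i\<in>A. \<bar>g (y i) - g (x i)\<bar>) \<le> variation g"
proof -
  have fin: "finite A" and lt: "\<forall>i\<in>A. x i < y i"
    and dj: "\<forall>i\<in>A. \<forall>j\<in>A. i \<noteq> j \<longrightarrow> {x i<..<y i} \<inter> {x j<..<y j} = {}"
    using A unfolding disjoint_ivls_def by blast+
  obtain h where h: "bij_betw h {..<card A} A"
    using ex_bij_betw_nat_finite[OF fin] by (auto simp: atLeast0LessThan)
  have hA: "h k \<in> A" if "k < card A" for k using h that by (auto simp: bij_betw_def)
  have hinj: "h i \<noteq> h j" if "i < card A" "j < card A" "i \<noteq> j" for i j
    using h that by (auto simp: bij_betw_def inj_on_def)
  have "(\<Sum>i\<in>A. \<bar>g (y i) - g (x i)\<bar>) = (\<Sum>k<card A. \<bar>g ((x \<circ> h) k) - g ((y \<circ> h) k)\<bar>)"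
    using sum.reindex_bij_betw[OF h, of "\<lambda>i. \<bar>g (y i) - g (x i)\<bar>"]
    by (simp add: abs_minus_commute)
  moreover have "(\<Sum>k<card A. \<bar>g ((x \<circ> h) k) - g ((y \<circ> h) k)\<bar>) \<in> var_sums g"
    unfolding var_sums_def
    by (intro CollectI exI[of _ "card A"] exI[of _ "x \<circ> h"] exI[of _ "y \<circ> h"] conjI refl)
      (use hA hinj lt dj in auto)
  ultimately show ?thesis using variation_upper[OF g] by simp
qed

lemma disjoint_ivls_union_le_variation:
  assumes g: "g \<in> BV" and A: "disjoint_ivls A x y" and B: "disjoint_ivls B u v"
    and dj: "\<forall>i\<in>A. \<forall>j\<in>B. {x i<..<y i} \<inter> {u j<..<v j} = {}"
  shows "(\<Sum>i\<in>A. \<bar>g (y i) - g (x i)\<bar>) + (\<Sum>j\<in>B. \<bar>g (v j) - g (u j)\<bar>) \<le> variation g"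
proof -
  let ?C = "Inl ` A \<union> Inr ` B" and ?X = "case_sum x u" and ?Y = "case_sum y v"
  have djA: "{x a<..<y a} \<inter> {x b<..<y b} = {}" if "a \<in> A" "b \<in> A" "a \<noteq> b" for a b
    using A that unfolding disjoint_ivls_def by blast
  have djB: "{u a<..<v a} \<inter> {u b<..<v b} = {}" if "a \<in> B" "b \<in> B" "a \<noteq> b" for a b
    using B that unfolding disjoint_ivls_def by blast
  have "{?X i<..<?Y i} \<inter> {?X j<..<?Y j} = {}" if "i \<in> ?C" "j \<in> ?C" "i \<noteq> j" for i j
    using that djA djB dj by (elim UnE imageE) (auto simp: Int_commute)
  then have "disjoint_ivls ?C ?X ?Y"
    using A B unfolding disjoint_ivls_def by auto
  then have "(\<Sum>i\<in>?C. \<bar>g (?Y i) - g (?X i)\<bar>) \<le> variation g"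
    by (rule disjoint_ivls_le_variation[OF g])
  moreover have "(\<Sum>i\<in>?C. \<bar>g (?Y i) - g (?X i)\<bar>) =
      (\<Sum>i\<in>A. \<bar>g (y i) - g (x i)\<bar>) + (\<Sum>j\<in>B. \<bar>g (v j) - g (u j)\<bar>)"
    using A B unfolding disjoint_ivls_def by (subst sum.union_disjoint) (auto simp: sum.reindex)
  ultimately show ?thesis by simp
qed

lemma BV_tail:
  assumes g: "g \<in> BV" and e: "\<epsilon> > 0"
  obtains m M where "m \<le> M"
    "\<And>(A::'i set) x y. disjoint_ivls A x y \<Longrightarrow> (\<forall>i\<in>A. y i \<le> m \<or> M \<le> x i) \<Longrightarrow>
        (\<Sum>i\<in>A. \<bar>g (y i) - g (x i)\<bar>) \<le> \<epsilon>"
proof -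
  have "variation g - \<epsilon> < Sup (var_sums g)" using e by (simp add: variation_def)
  then obtain s where s: "s \<in> var_sums g" "variation g - \<epsilon> < s"
    using less_cSup_iff[of "var_sums g"] var_sums_zero g unfolding BV_def by blast
  then obtain n :: nat and x y where sdef: "s = (\<Sum>i<n. \<bar>g (x i) - g (y i)\<bar>)"
    and lt: "\<forall>i<n. x i < y i"
    and dj: "\<forall>i<n. \<forall>j<n. i \<noteq> j \<longrightarrow> {x i<..<y i} \<inter> {x j<..<y j} = {}"
    unfolding var_sums_def by blast
  have fam: "disjoint_ivls {..<n} x y" using lt dj by (simp add: disjoint_ivls_def)
  define m where "m = Min (insert 0 (x ` {..<n}))"
  define M where "M = Max (insert 0 (y ` {..<n}))"
  have mx: "m \<le> x k" and My: "y k \<le> M" if "k < n" for k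
    using that by (auto simp: m_def M_def)
  show ?thesis
  proof (rule that[of m M])
    have "m \<le> 0" "0 \<le> M" by (auto simp: m_def M_def)
    then show "m \<le> M" by linarith
    fix A :: "'i set" and u v
    assume A: "disjoint_ivls A u v" "\<forall>i\<in>A. v i \<le> m \<or> M \<le> u i"
    have "\<forall>i\<in>A. \<forall>j\<in>{..<n}. {u i<..<v i} \<inter> {x j<..<y j} = {}"
    proof (intro ballI)
      fix i j assume "i \<in> A" "j \<in> {..<n}"
      then show "{u i<..<v i} \<inter> {x j<..<y j} = {}"
        using A(2) mx[of j] My[of j] by fastforce
    qed
    then have "(\<Sum>i\<in>A. \<bar>g (v i) - g (u i)\<bar>) + (\<Sum>j<n. \<bar>g (y j) - g (x j)\<bar>) \<le> variation g"
      using disjoint_ivls_union_le_variation[OF g A(1) fam] by blast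
    moreover have "(\<Sum>j<n. \<bar>g (y j) - g (x j)\<bar>) = s"
      by (simp add: sdef abs_minus_commute)
    ultimately show "(\<Sum>i\<in>A. \<bar>g (v i) - g (u i)\<bar>) \<le> \<epsilon>" using s(2) by linarith
  qed
qed

lemma BV_small_oscillation:
  assumes g: "g \<in> BV" and e: "e > 0"
  obtains m M where "\<And>s t. (s \<le> m \<and> t \<le> m) \<or> (M \<le> s \<and> M \<le> t) \<Longrightarrow> \<bar>g s - g t\<bar> \<le> e"
proof -
  obtain m M where "m \<le> M" and tail: "\<And>(A::unit set) x y. disjoint_ivls A x y \<Longrightarrow>
      (\<forall>i\<in>A. y i \<le> m \<or> M \<le> x i) \<Longrightarrow> (\<Sum>i\<in>A. \<bar>g (y i) - g (x i)\<bar>) \<le> e"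
    using BV_tail[where 'i=unit, OF g e] by blast
  have step: "\<bar>g t - g s\<bar> \<le> e" if "s < t" "t \<le> m \<or> M \<le> s" for s t
  proof -
    have "disjoint_ivls {()} (\<lambda>_. s) (\<lambda>_. t)" using that(1) by (simp add: disjoint_ivls_def)
    from tail[OF this] that(2) show ?thesis by simp
  qed
  have "\<bar>g s - g t\<bar> \<le> e" if st: "(s \<le> m \<and> t \<le> m) \<or> (M \<le> s \<and> M \<le> t)" for s t
  proof (cases s t rule: linorder_cases)
    case less then show ?thesis using step[of s t] st by (auto simp: abs_minus_commute)
  next
    case equal then show ?thesis using e by simp
  next
    case greater then show ?thesis using step[of t s] st by auto
  qed
  then show ?thesis using that by blast
qed

lemma BV_has_limits:
  assumes g: "g \<in> BV"
  shows "\<exists>L. (g \<longlongrightarrow> L) at_top" "\<exists>L. (g \<longlongrightarrow> L) at_bot"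
proof -
  show "\<exists>L. (g \<longlongrightarrow> L) at_top"
  proof (rule real_cauchy_limit)
    fix e :: real assume "e > 0"
    then obtain M where "\<And>s t. M \<le> s \<and> M \<le> t \<Longrightarrow> \<bar>g s - g t\<bar> \<le> e"
      using BV_small_oscillation[OF g] by metis
    then show "\<exists>P. eventually P at_top \<and> (\<forall>s t. P s \<and> P t \<longrightarrow> \<bar>g s - g t\<bar> \<le> e)"
      using eventually_ge_at_top[of M] by blast
  qed
  show "\<exists>L. (g \<longlongrightarrow> L) at_bot"
  proof (rule real_cauchy_limit)
    fix e :: real assume "e > 0"
    then obtain m where "\<And>s t. s \<le> m \<and> t \<le> m \<Longrightarrow> \<bar>g s - g t\<bar> \<le> e"
      using BV_small_oscillation[OF g] by metis
    then show "\<exists>P. eventually P at_bot \<and> (\<forall>s t. P s \<and> P t \<longrightarrow> \<bar>g s - g t\<bar> \<le> e)"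
      using eventually_le_at_bot[of m] by blast
  qed
qed

lemma lim_at_pinf: "(f \<longlongrightarrow> L) at_top \<Longrightarrow> at_pinf f = L"
  unfolding at_pinf_def by (rule tendsto_Lim) simp_all

lemma lim_at_minf: "(f \<longlongrightarrow> L) at_bot \<Longrightarrow> at_minf f = L"
  unfolding at_minf_def by (rule tendsto_Lim) simp_all

lemma BV_tendsto_pinf: "g \<in> BV \<Longrightarrow> (g \<longlongrightarrow> at_pinf g) at_top"
  using BV_has_limits(1) lim_at_pinf by metis

lemma BV_tendsto_minf: "g \<in> BV \<Longrightarrow> (g \<longlongrightarrow> at_minf g) at_bot"
  using BV_has_limits(2) lim_at_minf by metis

definition stieltjes_sum :: "(real \<Rightarrow> real) \<Rightarrow> (real \<Rightarrow> real) \<Rightarrow> (real \<times> real set) set \<Rightarrow> real" where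
  "stieltjes_sum H g p = (\<Sum>(t,K)\<in>p. H t * (g (Sup K) - g (Inf K)))"

lemma tagged_division_cell:
  assumes "p tagged_division_of (S::real set)" "(t, K) \<in> p"
  shows "\<exists>c d. c \<le> d \<and> K = {c..d} \<and> t \<in> K \<and> K \<subseteq> S"
proof -
  obtain c d where "K = {c..d}" using tagged_division_ofD(4)[OF assms] by (metis box_real(2))
  moreover have "t \<in> K" "K \<subseteq> S" using tagged_division_ofD(2,3)[OF assms] by auto
  ultimately show ?thesis by fastforce
qed

lemma stieltjes_sum_incr:
  assumes "p tagged_division_of (S::real set)"
  shows "stieltjes_sum H g p = (\<Sum>u\<in>p. H (fst u) * incr g (snd u))"
  unfolding stieltjes_sum_def
proof (rule sum.cong[OF refl])
  fix u assume "u \<in> p"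
  then obtain c d where "c \<le> d" "snd u = {c..d}"
    using tagged_division_cell[OF assms, of "fst u" "snd u"] by auto
  then show "(case u of (t, K) \<Rightarrow> H t * (g (Sup K) - g (Inf K))) = H (fst u) * incr g (snd u)"
    by (simp add: case_prod_unfold incr_def)
qed

lemma tagged_division_nonoverlapping:
  assumes p: "p tagged_division_of (S::real set)" and P: "P \<subseteq> p"
  shows "finite P" "\<forall>u\<in>P. \<exists>c d. snd u = {c..d}"
    "\<forall>u\<in>P. \<forall>v\<in>P. u \<noteq> v \<longrightarrow> interior (snd u) \<inter> interior (snd v) = {}"
proof -
  show "finite P" using tagged_division_ofD(1)[OF p] P finite_subset by blast
  show "\<forall>u\<in>P. \<exists>c d. snd u = {c..d}"
    using P tagged_division_cell[OF p] by (metis prod.collapse subsetD)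
  show "\<forall>u\<in>P. \<forall>v\<in>P. u \<noteq> v \<longrightarrow> interior (snd u) \<inter> interior (snd v) = {}"
    using P tagged_division_ofD(5)[OF p] by (metis prod.collapse subsetD)
qed

lemma incr_split:
  assumes q: "q tagged_division_of {a..b}" and K: "{c..d} \<subseteq> {a..b}"
  shows "incr g {c..d} = (\<Sum>v\<in>q. incr g ({c..d} \<inter> snd v))"
proof -
  let ?K = "{c..d}"
  define D where "D = snd ` q"
  have D: "D division_of {a..b}" unfolding D_def using division_of_tagged_division[OF q] .
  have finD: "finite D" using D by blast
  have ivl: "\<exists>u v. L = {u..v}" if "L \<in> D" for L
    using division_ofD(4)[OF D that] by (metis box_real(2))
  define D' where "D' = {L \<in> D. ?K \<inter> L \<noteq> {}}"
  have D'D: "D' \<subseteq> D" by (auto simp: D'_def)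
  have "(\<lambda>L. ?K \<inter> L) ` D' division_of ?K"
    using division_inter_1[OF D, of c d] K by (simp add: D'_def image_def setcompr_eq_image)
  then have "incr g ?K = sum (incr g) ((\<lambda>L. ?K \<inter> L) ` D')"
    by (simp add: incr_division)
  also have "\<dots> = sum (incr g \<circ> (\<lambda>L. ?K \<inter> L)) D'"
  proof (rule sum.reindex_nontrivial)
    show "finite D'" using finD D'D finite_subset by blast
    fix L1 L2 assume L: "L1 \<in> D'" "L2 \<in> D'" "L1 \<noteq> L2" and eq: "?K \<inter> L1 = ?K \<inter> L2"
    have "interior L1 \<inter> interior L2 = {}"
      using division_ofD(5)[OF D, of L1 L2] L D'D by blast
    then have "interior (?K \<inter> L1) = {}"
      using eq interior_mono[of "?K \<inter> L1" L1] interior_mono[of "?K \<inter> L1" L2] by blast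
    moreover obtain u v where "L1 = {u..v}" using ivl L D'D by blast
    ultimately show "incr g (?K \<inter> L1) = 0"
      using incr_degenerate[of "min d v" "max c u" g] by (simp add: greaterThanLessThan_empty_iff)
  qed
  also have "\<dots> = (\<Sum>L\<in>D. incr g (?K \<inter> L))"
    unfolding comp_def by (rule sum.mono_neutral_left[OF finD D'D]) (auto simp: D'_def incr_def)
  also have "\<dots> = (\<Sum>(t, L)\<in>q. incr g (?K \<inter> L))"
    unfolding D_def
    by (rule sum.over_tagged_division_lemma[OF q, symmetric])
      (simp add: incr_degenerate greaterThanLessThan_empty_iff)
  finally show ?thesis by (simp add: case_prod_unfold)
qed

text \<open>Summing \<open>|incr g|\<close> over nonoverlapping intervals amounts to a sum over a family of
  disjoint open intervals; so any bound valid for such families (the variation, or a tail bound)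
  also bounds it.\<close>
lemma nonoverlapping_incr_sum_le:
  assumes fin: "finite S" and iv: "\<forall>i\<in>S. \<exists>c d. f i = {c..d}"
    and dj: "\<forall>i\<in>S. \<forall>j\<in>S. i \<noteq> j \<longrightarrow> interior (f i) \<inter> interior (f j) = {}"
    and W: "\<And>A x y. A \<subseteq> S \<Longrightarrow> disjoint_ivls A x y \<Longrightarrow> (\<forall>i\<in>A. f i = {x i..y i}) \<Longrightarrow>
              (\<Sum>i\<in>A. \<bar>g (y i) - g (x i)\<bar>) \<le> W"
  shows "(\<Sum>i\<in>S. \<bar>incr g (f i)\<bar>) \<le> W"
proof -
  from iv obtain c d where cd: "\<forall>i\<in>S. f i = {c i..d i}" by metis
  define A where "A = {i\<in>S. c i < d i}"
  have AS: "A \<subseteq> S" by (auto simp: A_def)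
  have fam: "disjoint_ivls A c d"
    unfolding disjoint_ivls_def
  proof (intro conjI ballI impI)
    show "finite A" using fin AS finite_subset by blast
    fix i j assume "i \<in> A" "j \<in> A" "i \<noteq> j"
    then have "interior (f i) \<inter> interior (f j) = {}" "f i = {c i..d i}" "f j = {c j..d j}"
      using dj cd AS by blast+
    then show "{c i<..<d i} \<inter> {c j<..<d j} = {}" by simp
  qed (simp add: A_def)
  have "(\<Sum>i\<in>S. \<bar>incr g (f i)\<bar>) = (\<Sum>i\<in>A. \<bar>incr g (f i)\<bar>)"
    by (rule sum.mono_neutral_right[OF fin AS]) (use cd in \<open>auto simp: A_def not_less incr_degenerate\<close>)
  also have "\<dots> = (\<Sum>i\<in>A. \<bar>g (d i) - g (c i)\<bar>)"
    using cd by (intro sum.cong) (auto simp: A_def incr_ivl)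
  also have "\<dots> \<le> W" using W[OF AS fam] cd AS by blast
  finally show ?thesis .
qed

lemma nonoverlapping_incr_sum_le_variation:
  assumes "g \<in> BV" "finite S" "\<forall>i\<in>S. \<exists>c d. f i = {c..d}"
    "\<forall>i\<in>S. \<forall>j\<in>S. i \<noteq> j \<longrightarrow> interior (f i) \<inter> interior (f j) = {}"
  shows "(\<Sum>i\<in>S. \<bar>incr g (f i)\<bar>) \<le> variation g"
  using nonoverlapping_incr_sum_le[OF assms(2-4)] disjoint_ivls_le_variation[OF assms(1)] by blast

lemma common_refinement_nonoverlapping:
  assumes p: "p tagged_division_of (S::real set)" and q: "q tagged_division_of (S'::real set)"
  shows "finite (p \<times> q)" "\<forall>w\<in>p \<times> q. \<exists>c d. snd (fst w) \<inter> snd (snd w) = {c..d}"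
    "\<forall>w\<in>p \<times> q. \<forall>w'\<in>p \<times> q. w \<noteq> w' \<longrightarrow>
        interior (snd (fst w) \<inter> snd (snd w)) \<inter> interior (snd (fst w') \<inter> snd (snd w')) = {}"
proof -
  note P = tagged_division_nonoverlapping[OF p order_refl]
    and Q = tagged_division_nonoverlapping[OF q order_refl]
  show "finite (p \<times> q)" using P(1) Q(1) by simp
  show "\<forall>w\<in>p \<times> q. \<exists>c d. snd (fst w) \<inter> snd (snd w) = {c..d}"
    using P(2) Q(2) by (fastforce simp: Int_atLeastAtMost)
  show "\<forall>w\<in>p \<times> q. \<forall>w'\<in>p \<times> q. w \<noteq> w' \<longrightarrow>
        interior (snd (fst w) \<inter> snd (snd w)) \<inter> interior (snd (fst w') \<inter> snd (snd w')) = {}"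
  proof (intro ballI impI)
    fix w w' assume w: "w \<in> p \<times> q" and w': "w' \<in> p \<times> q" and ne: "w \<noteq> w'"
    then have "interior (snd (fst w)) \<inter> interior (snd (fst w')) = {} \<or>
               interior (snd (snd w)) \<inter> interior (snd (snd w')) = {}"
      using P(3) Q(3) by (metis mem_Times_iff prod_eq_iff)
    then show "interior (snd (fst w) \<inter> snd (snd w)) \<inter> interior (snd (fst w') \<inter> snd (snd w')) = {}"
      by auto
  qed
qed

lemma stieltjes_sum_refine:
  assumes p: "p tagged_division_of {a..b}" and q: "q tagged_division_of {a..b}"
  shows "stieltjes_sum H g p = (\<Sum>u\<in>p. \<Sum>v\<in>q. H (fst u) * incr g (snd u \<inter> snd v))"
  unfolding stieltjes_sum_incr[OF p]
proof (rule sum.cong[OF refl])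
  fix u assume "u \<in> p"
  then obtain c d where "snd u = {c..d}" "snd u \<subseteq> {a..b}"
    using tagged_division_cell[OF p, of "fst u" "snd u"] by auto
  then show "H (fst u) * incr g (snd u) = (\<Sum>v\<in>q. H (fst u) * incr g (snd u \<inter> snd v))"
    using incr_split[OF q, of c d g] by (simp add: sum_distrib_left)
qed

text \<open>Two Stieltjes sums over divisions whose cells are finer than the modulus of continuity of
  \<open>H\<close> differ by at most the oscillation bound times the variation of \<open>g\<close>: on the common
  refinement, only pairs of cells that meet contribute, and their tags are \<open>\<delta>\<close>-close.\<close>
lemma stieltjes_sum_oscillation:
  assumes p: "p tagged_division_of {a..b}" and q: "q tagged_division_of {a..b}"
    and fp: "(\<lambda>t. ball t (\<delta>/2)) fine p" and fq: "(\<lambda>t. ball t (\<delta>/2)) fine q"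
    and Hc: "\<And>s t. s \<in> {a..b} \<Longrightarrow> t \<in> {a..b} \<Longrightarrow> \<bar>s - t\<bar> < \<delta> \<Longrightarrow> \<bar>H s - H t\<bar> \<le> \<epsilon>"
    and e0: "0 \<le> \<epsilon>" and g: "g \<in> BV"
  shows "\<bar>stieltjes_sum H g p - stieltjes_sum H g q\<bar> \<le> \<epsilon> * variation g"
proof -
  let ?I = "\<lambda>u v. incr g (snd u \<inter> snd v)"
  have close: "\<bar>H (fst u) - H (fst v)\<bar> \<le> \<epsilon>"
    if uv: "u \<in> p" "v \<in> q" "snd u \<inter> snd v \<noteq> {}" for u v
  proof -
    obtain z where z: "z \<in> snd u" "z \<in> snd v" using uv(3) by blast
    have "snd u \<subseteq> ball (fst u) (\<delta>/2)" "snd v \<subseteq> ball (fst v) (\<delta>/2)"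
      using fineD[OF fp, of "fst u" "snd u"] fineD[OF fq, of "fst v" "snd v"] uv by auto
    then have "dist (fst u) z < \<delta>/2" "dist (fst v) z < \<delta>/2" using z by auto
    then have "\<bar>fst u - fst v\<bar> < \<delta>" unfolding dist_real_def by linarith
    moreover have "fst u \<in> {a..b}" "fst v \<in> {a..b}"
      using tagged_division_cell[OF p, of "fst u" "snd u"] tagged_division_cell[OF q, of "fst v" "snd v"]
        uv by auto
    ultimately show ?thesis using Hc by blast
  qed
  have "stieltjes_sum H g p - stieltjes_sum H g q = (\<Sum>u\<in>p. \<Sum>v\<in>q. (H (fst u) - H (fst v)) * ?I u v)"
    unfolding stieltjes_sum_refine[OF p q] stieltjes_sum_refine[OF q p] sum.swap[of _ q p]
    by (simp add: Int_commute sum_subtractf left_diff_distrib)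
  also have "\<bar>\<dots>\<bar> \<le> (\<Sum>u\<in>p. \<Sum>v\<in>q. \<epsilon> * \<bar>?I u v\<bar>)"
  proof (rule order_trans[OF sum_abs sum_mono], rule order_trans[OF sum_abs sum_mono])
    fix u v assume "u \<in> p" "v \<in> q"
    then show "\<bar>(H (fst u) - H (fst v)) * ?I u v\<bar> \<le> \<epsilon> * \<bar>?I u v\<bar>"
      using close[of u v] by (cases "snd u \<inter> snd v = {}") (auto simp: incr_def abs_mult mult_right_mono)
  qed
  also have "\<dots> = \<epsilon> * (\<Sum>w\<in>p \<times> q. \<bar>incr g (snd (fst w) \<inter> snd (snd w))\<bar>)"
    by (simp add: sum_distrib_left sum.cartesian_product case_prod_unfold)
  also have "\<dots> \<le> \<epsilon> * variation g"
    by (rule mult_left_mono[OF nonoverlapping_incr_sum_le_variation[OF g common_refinement_nonoverlapping[OF p q]] e0])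
  finally show ?thesis .
qed

lemma stieltjes_sum_abs_le:
  assumes "p tagged_division_of (S::real set)"
  shows "\<bar>stieltjes_sum H g p\<bar> \<le> (\<Sum>u\<in>p. \<bar>H (fst u)\<bar> * \<bar>incr g (snd u)\<bar>)"
  unfolding stieltjes_sum_incr[OF assms] by (rule order_trans[OF sum_abs]) (simp add: abs_mult)

lemma weighted_incr_sum_le:
  assumes "\<And>u. u \<in> P \<Longrightarrow> \<bar>H (fst u)\<bar> \<le> B"
  shows "(\<Sum>u\<in>P. \<bar>H (fst u)\<bar> * \<bar>incr g (snd u)\<bar>) \<le> B * (\<Sum>u\<in>P. \<bar>incr g (snd u)\<bar>)"
  unfolding sum_distrib_left using assms by (intro sum_mono mult_right_mono) auto

lemma stieltjes_sum_bound:
  assumes p: "p tagged_division_of {a..b}" and HB: "\<And>t. t \<in> {a..b} \<Longrightarrow> \<bar>H t\<bar> \<le> B"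
    and B0: "0 \<le> B" and g: "g \<in> BV"
  shows "\<bar>stieltjes_sum H g p\<bar> \<le> B * variation g"
proof -
  note P = tagged_division_nonoverlapping[OF p order_refl]
  have "\<bar>H (fst u)\<bar> \<le> B" if "u \<in> p" for u
    using HB tagged_division_cell[OF p, of "fst u" "snd u"] that by auto
  then have "(\<Sum>u\<in>p. \<bar>H (fst u)\<bar> * \<bar>incr g (snd u)\<bar>) \<le> B * (\<Sum>u\<in>p. \<bar>incr g (snd u)\<bar>)"
    by (rule weighted_incr_sum_le)
  also have "\<dots> \<le> B * variation g"
    by (rule mult_left_mono[OF nonoverlapping_incr_sum_le_variation[OF g P] B0])
  finally show ?thesis using stieltjes_sum_abs_le[OF p, of H g] by linarith
qed

lemma stieltjes_sum_bound_tail: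
  assumes p: "p tagged_division_of {a..b}" and out: "b \<le> m \<or> M \<le> a"
    and HB: "\<And>t. t \<in> {a..b} \<Longrightarrow> \<bar>H t\<bar> \<le> B" and B0: "0 \<le> B"
    and T: "\<And>(A::(real \<times> real set) set) x y. disjoint_ivls A x y \<Longrightarrow>
             (\<forall>i\<in>A. y i \<le> m \<or> M \<le> x i) \<Longrightarrow> (\<Sum>i\<in>A. \<bar>g (y i) - g (x i)\<bar>) \<le> T"
  shows "\<bar>stieltjes_sum H g p\<bar> \<le> B * T"
proof -
  note P = tagged_division_nonoverlapping[OF p order_refl]
  have "\<bar>H (fst u)\<bar> \<le> B" if "u \<in> p" for u
    using HB tagged_division_cell[OF p, of "fst u" "snd u"] that by auto
  then have "(\<Sum>u\<in>p. \<bar>H (fst u)\<bar> * \<bar>incr g (snd u)\<bar>) \<le> B * (\<Sum>u\<in>p. \<bar>incr g (snd u)\<bar>)"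
    by (rule weighted_incr_sum_le)
  also have "(\<Sum>u\<in>p. \<bar>incr g (snd u)\<bar>) \<le> T"
  proof (rule nonoverlapping_incr_sum_le[OF P])
    fix A x y assume A: "A \<subseteq> p" "disjoint_ivls A x y" "\<forall>i\<in>A. snd i = {x i..y i}"
    have "y i \<le> m \<or> M \<le> x i" if "i \<in> A" for i
    proof -
      have "x i < y i" using A(2) that by (auto simp: disjoint_ivls_def)
      moreover have "snd i \<subseteq> {a..b}"
        using A(1) that tagged_division_cell[OF p, of "fst i" "snd i"] by auto
      ultimately show ?thesis using A(3) that out by auto
    qed
    then show "(\<Sum>i\<in>A. \<bar>g (y i) - g (x i)\<bar>) \<le> T" using T[OF A(2)] by blast
  qed
  then have "B * (\<Sum>u\<in>p. \<bar>incr g (snd u)\<bar>) \<le> B * T" by (rule mult_left_mono[OF _ B0])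
  finally show ?thesis using stieltjes_sum_abs_le[OF p, of H g] by linarith
qed

text \<open>The split bound: cells tagged near the window \<open>[m, M]\<close> are weighted by the local bound
  \<open>B1\<close> of \<open>H\<close> and the variation; the remaining cells lie outside \<open>]m, M[\<close> and are weighted
  by the global bound \<open>B\<close> and the tail bound \<open>T\<close>.\<close>
lemma stieltjes_sum_bound_split:
  assumes p: "p tagged_division_of {a..b}" and fp: "(\<lambda>t. ball t r) fine p"
    and HB: "\<And>t. \<bar>H t\<bar> \<le> B" and HB1: "\<And>t. m - r \<le> t \<Longrightarrow> t \<le> M + r \<Longrightarrow> \<bar>H t\<bar> \<le> B1"
    and B0: "0 \<le> B" and B10: "0 \<le> B1" and g: "g \<in> BV"
    and T: "\<And>(A::(real \<times> real set) set) x y. disjoint_ivls A x y \<Longrightarrow>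
             (\<forall>i\<in>A. y i \<le> m \<or> M \<le> x i) \<Longrightarrow> (\<Sum>i\<in>A. \<bar>g (y i) - g (x i)\<bar>) \<le> T"
  shows "\<bar>stieltjes_sum H g p\<bar> \<le> B1 * variation g + B * T"
proof -
  define P1 where "P1 = {u\<in>p. m - r \<le> fst u \<and> fst u \<le> M + r}"
  have P1p: "P1 \<subseteq> p" and P2p: "p - P1 \<subseteq> p" by (auto simp: P1_def)
  have "(\<Sum>u\<in>P1. \<bar>H (fst u)\<bar> * \<bar>incr g (snd u)\<bar>) \<le> B1 * (\<Sum>u\<in>P1. \<bar>incr g (snd u)\<bar>)"
    by (rule weighted_incr_sum_le) (auto simp: P1_def HB1)
  also have "\<dots> \<le> B1 * variation g"
    by (rule mult_left_mono[OF nonoverlapping_incr_sum_le_variation[OF g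
          tagged_division_nonoverlapping[OF p P1p]] B10])
  finally have near: "(\<Sum>u\<in>P1. \<bar>H (fst u)\<bar> * \<bar>incr g (snd u)\<bar>) \<le> B1 * variation g" .
  have "(\<Sum>u\<in>p - P1. \<bar>incr g (snd u)\<bar>) \<le> T"
  proof (rule nonoverlapping_incr_sum_le[OF tagged_division_nonoverlapping[OF p P2p]])
    fix A x y assume A: "A \<subseteq> p - P1" "disjoint_ivls A x y" "\<forall>i\<in>A. snd i = {x i..y i}"
    have "y i \<le> m \<or> M \<le> x i" if i: "i \<in> A" for i
    proof -
      have "x i < y i" using A(2) i by (auto simp: disjoint_ivls_def)
      moreover have "i \<in> p" "i \<notin> P1" using A(1) i by auto
      moreover have "snd i \<subseteq> ball (fst i) r" if "i \<in> p" using fineD[OF fp, of "fst i" "snd i"] that by simp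
      ultimately have "\<bar>fst i - x i\<bar> < r" "\<bar>fst i - y i\<bar> < r" "fst i < m - r \<or> M + r < fst i"
        using A(3) i by (auto simp: P1_def dist_real_def subset_iff)
      then show ?thesis by linarith
    qed
    then show "(\<Sum>i\<in>A. \<bar>g (y i) - g (x i)\<bar>) \<le> T" using T[OF A(2)] by blast
  qed
  then have "B * (\<Sum>u\<in>p - P1. \<bar>incr g (snd u)\<bar>) \<le> B * T" by (rule mult_left_mono[OF _ B0])
  then have far: "(\<Sum>u\<in>p - P1. \<bar>H (fst u)\<bar> * \<bar>incr g (snd u)\<bar>) \<le> B * T"
    using weighted_incr_sum_le[of "p - P1" H B g, OF HB] by linarith
  have "\<bar>stieltjes_sum H g p\<bar> \<le> (\<Sum>u\<in>p. \<bar>H (fst u)\<bar> * \<bar>incr g (snd u)\<bar>)"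
    by (rule stieltjes_sum_abs_le[OF p])
  also have "\<dots> = (\<Sum>u\<in>p - P1. \<bar>H (fst u)\<bar> * \<bar>incr g (snd u)\<bar>) + (\<Sum>u\<in>P1. \<bar>H (fst u)\<bar> * \<bar>incr g (snd u)\<bar>)"
    by (rule sum.subset_diff[OF P1p tagged_division_ofD(1)[OF p]])
  finally show ?thesis using near far by linarith
qed

text \<open>From here on, keep the classical reasoner from expanding tagged divisions: with these
  destruction rules active, proof search on goals about divisions does not terminate in time.\<close>
declare tagged_division_ofD[rule del] division_ofD[rule del]

lemma hs_on_iff:
  "hs_has_integral_on H g I a b \<longleftrightarrow>
    (\<forall>e>0. \<exists>\<gamma>. gauge \<gamma> \<and> (\<forall>p. p tagged_division_of {a..b} \<and> \<gamma> fine p \<longrightarrow>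
        \<bar>stieltjes_sum H g p - I\<bar> < e))"
  by (simp add: hs_has_integral_on_def stieltjes_sum_def)

lemma fine_ball_mono:
  assumes "r \<le> s" "(\<lambda>t. ball t r) fine p"
  shows "(\<lambda>t. ball t s) fine p"
proof (rule fineI)
  fix t K assume "(t, K) \<in> p"
  then show "K \<subseteq> ball t s" using fineD[OF assms(2)] subset_ball[OF assms(1), of t] by blast
qed

lemma eventually_small_radius: "0 < r \<Longrightarrow> eventually (\<lambda>\<delta>. 0 < \<delta> \<and> \<delta> < r) (at_right (0::real))"
  unfolding eventually_at_right_field by (intro exI[of _ r]) auto

text \<open>Cauchy criterion for Stieltjes sums of a continuous function: sums over divisions finer
  than half the modulus of continuity of \<open>H\<close> (for the tolerance \<open>e\<close> divided by a bound of the
  variation) differ by less than \<open>e\<close>.\<close>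
lemma stieltjes_sum_cauchy:
  assumes H: "continuous_on {a..b} H" and g: "g \<in> BV" and e: "e > 0"
  obtains d where "d > 0"
    "\<And>p q. p tagged_division_of {a..b} \<Longrightarrow> q tagged_division_of {a..b} \<Longrightarrow>
      (\<lambda>t. ball t (d/2)) fine p \<Longrightarrow> (\<lambda>t. ball t (d/2)) fine q \<Longrightarrow>
      \<bar>stieltjes_sum H g p - stieltjes_sum H g q\<bar> < e"
proof -
  define V where "V = variation g + 1"
  have V: "0 < V" "variation g < V" using variation_nonneg[OF g] by (auto simp: V_def)
  have "e / V > 0" using e V by simp
  moreover have "uniformly_continuous_on {a..b} H"
    by (rule compact_uniformly_continuous[OF H compact_Icc])
  ultimately obtain d where d: "d > 0"
    "\<forall>x\<in>{a..b}. \<forall>x'\<in>{a..b}. dist x' x < d \<longrightarrow> dist (H x') (H x) < e / V"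
    unfolding uniformly_continuous_on_def by blast
  have Hc: "\<bar>H s - H t\<bar> \<le> e / V" if "s \<in> {a..b}" "t \<in> {a..b}" "\<bar>s - t\<bar> < d" for s t
    using d(2) that by (force simp: dist_real_def)
  have "e / V * variation g < e / V * V" using V e by (intro mult_strict_left_mono) auto
  then have small: "e / V * variation g < e" using V by simp
  show ?thesis
  proof (rule that[OF d(1)])
    fix p q assume "p tagged_division_of {a..b}" "q tagged_division_of {a..b}"
      "(\<lambda>t. ball t (d/2)) fine p" "(\<lambda>t. ball t (d/2)) fine q"
    then have "\<bar>stieltjes_sum H g p - stieltjes_sum H g q\<bar> \<le> e / V * variation g"
      by (rule stieltjes_sum_oscillation[OF _ _ _ _ Hc less_imp_le[OF \<open>e / V > 0\<close>] g])
    then show "\<bar>stieltjes_sum H g p - stieltjes_sum H g q\<bar> < e" using small by linarith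
  qed
qed

lemma fine_division_family:
  fixes a b :: real
  obtains P where "\<And>\<delta>. 0 < \<delta> \<Longrightarrow> P \<delta> tagged_division_of {a..b} \<and> (\<lambda>t. ball t \<delta>) fine P \<delta>"
proof
  fix \<delta> :: real assume "0 < \<delta>"
  have "\<exists>p. p tagged_division_of {a..b} \<and> (\<lambda>t. ball t \<delta>) fine p"
    using fine_division_exists_real[OF gauge_ball[OF \<open>0 < \<delta>\<close>]] by blast
  then show "(SOME p. p tagged_division_of {a..b} \<and> (\<lambda>t. ball t \<delta>) fine p) tagged_division_of {a..b} \<and>
      (\<lambda>t. ball t \<delta>) fine (SOME p. p tagged_division_of {a..b} \<and> (\<lambda>t. ball t \<delta>) fine p)"
    by (rule someI_ex)
qed

lemma fine_sums_converge:
  assumes H: "continuous_on {a..b} H" and g: "g \<in> BV"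
    and P: "\<And>\<delta>. 0 < \<delta> \<Longrightarrow> P \<delta> tagged_division_of {a..b} \<and> (\<lambda>t. ball t \<delta>) fine P \<delta>"
  shows "\<exists>I. ((\<lambda>\<delta>. stieltjes_sum H g (P \<delta>)) \<longlongrightarrow> I) (at_right 0)"
proof (rule real_cauchy_limit)
  fix e :: real assume "e > 0"
  then obtain d where "d > 0" and d: "\<And>p q. p tagged_division_of {a..b} \<Longrightarrow> q tagged_division_of {a..b} \<Longrightarrow>
    (\<lambda>t. ball t (d/2)) fine p \<Longrightarrow> (\<lambda>t. ball t (d/2)) fine q \<Longrightarrow>
    \<bar>stieltjes_sum H g p - stieltjes_sum H g q\<bar> < e"
    using stieltjes_sum_cauchy[OF H g] by blast
  have fineP: "P \<delta> tagged_division_of {a..b} \<and> (\<lambda>t. ball t (d/2)) fine P \<delta>" if "0 < \<delta>" "\<delta> < d/2" for \<delta>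
    using P[OF that(1)] fine_ball_mono[of \<delta> "d/2" "P \<delta>"] that(2) by simp
  have "\<bar>stieltjes_sum H g (P \<delta>) - stieltjes_sum H g (P \<delta>')\<bar> \<le> e"
    if "0 < \<delta> \<and> \<delta> < d/2" "0 < \<delta>' \<and> \<delta>' < d/2" for \<delta> \<delta>'
    using d fineP[of \<delta>] fineP[of \<delta>'] that by (simp add: less_imp_le)
  then show "\<exists>Q. eventually Q (at_right 0) \<and>
      (\<forall>\<delta> \<delta>'. Q \<delta> \<and> Q \<delta>' \<longrightarrow> \<bar>stieltjes_sum H g (P \<delta>) - stieltjes_sum H g (P \<delta>')\<bar> \<le> e)"
    using eventually_small_radius[of "d/2"] \<open>d > 0\<close> by (intro exI[of _ "\<lambda>\<delta>. 0 < \<delta> \<and> \<delta> < d/2"]) auto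
qed

text \<open>Existence of the Henstock--Stieltjes integral of a continuous function against a \<open>BV\<close>
  function on \<open>[a, b]\<close>: the limit of the sums over \<open>\<delta>\<close>-fine divisions is the integral, even
  for gauges that are constant balls.\<close>
lemma hs_on_exists:
  assumes H: "continuous_on {a..b} H" and g: "g \<in> BV"
  shows "\<exists>I. hs_has_integral_on H g I a b"
proof -
  obtain P where P: "\<And>\<delta>. 0 < \<delta> \<Longrightarrow> P \<delta> tagged_division_of {a..b} \<and> (\<lambda>t. ball t \<delta>) fine P \<delta>"
    using fine_division_family[of a b] by blast
  have fineP: "P \<delta> tagged_division_of {a..b} \<and> (\<lambda>t. ball t (d/2)) fine P \<delta>" if "0 < \<delta>" "\<delta> < d/2" for \<delta> d
    using P[OF that(1)] fine_ball_mono[of \<delta> "d/2" "P \<delta>"] that(2) by simp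
  obtain I where I: "((\<lambda>\<delta>. stieltjes_sum H g (P \<delta>)) \<longlongrightarrow> I) (at_right 0)"
    using fine_sums_converge[OF H g P] by blast
  have "hs_has_integral_on H g I a b"
    unfolding hs_on_iff
  proof (intro allI impI)
    fix e :: real assume e: "e > 0"
    then have "e/2 > 0" by simp
    then obtain d where "d > 0" and d: "\<And>p q. p tagged_division_of {a..b} \<Longrightarrow> q tagged_division_of {a..b} \<Longrightarrow>
      (\<lambda>t. ball t (d/2)) fine p \<Longrightarrow> (\<lambda>t. ball t (d/2)) fine q \<Longrightarrow>
      \<bar>stieltjes_sum H g p - stieltjes_sum H g q\<bar> < e/2"
      using stieltjes_sum_cauchy[OF H g] by blast
    have "eventually (\<lambda>\<delta>. (0 < \<delta> \<and> \<delta> < d/2) \<and> dist (stieltjes_sum H g (P \<delta>)) I < e/2) (at_right 0)"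
      using \<open>d > 0\<close> \<open>e/2 > 0\<close> by (intro eventually_conj eventually_small_radius I[THEN tendstoD]) auto
    then obtain \<delta> where \<delta>: "0 < \<delta>" "\<delta> < d/2" "\<bar>stieltjes_sum H g (P \<delta>) - I\<bar> < e/2"
      using eventually_happens'[OF trivial_limit_at_right_real] by (auto simp: dist_real_def)
    show "\<exists>\<gamma>. gauge \<gamma> \<and> (\<forall>p. p tagged_division_of {a..b} \<and> \<gamma> fine p \<longrightarrow> \<bar>stieltjes_sum H g p - I\<bar> < e)"
    proof (intro exI conjI allI impI)
      show "gauge (\<lambda>t. ball t (d/2))" using \<open>d > 0\<close> by (intro gauge_ball) simp
      fix p assume "p tagged_division_of {a..b} \<and> (\<lambda>t. ball t (d/2)) fine p"
      then have "\<bar>stieltjes_sum H g p - stieltjes_sum H g (P \<delta>)\<bar> < e/2"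
        using d fineP[OF \<delta>(1,2)] by simp
      then show "\<bar>stieltjes_sum H g p - I\<bar> < e" using \<delta>(3) by linarith
    qed
  qed
  then show ?thesis by blast
qed

lemma hs_on_common:
  assumes "hs_has_integral_on H1 g1 I1 a b" "hs_has_integral_on H2 g2 I2 a b" "e > 0"
  obtains \<gamma> where "gauge \<gamma>"
    "\<And>p. p tagged_division_of {a..b} \<Longrightarrow> \<gamma> fine p \<Longrightarrow>
      \<bar>stieltjes_sum H1 g1 p - I1\<bar> < e \<and> \<bar>stieltjes_sum H2 g2 p - I2\<bar> < e"
proof -
  obtain \<gamma>1 where g1: "gauge \<gamma>1"
    "\<forall>p. p tagged_division_of {a..b} \<and> \<gamma>1 fine p \<longrightarrow> \<bar>stieltjes_sum H1 g1 p - I1\<bar> < e"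
    using assms(1)[unfolded hs_on_iff, rule_format, OF assms(3)] by blast
  obtain \<gamma>2 where g2: "gauge \<gamma>2"
    "\<forall>p. p tagged_division_of {a..b} \<and> \<gamma>2 fine p \<longrightarrow> \<bar>stieltjes_sum H2 g2 p - I2\<bar> < e"
    using assms(2)[unfolded hs_on_iff, rule_format, OF assms(3)] by blast
  show ?thesis
  proof (rule that[of "\<lambda>x. \<gamma>1 x \<inter> \<gamma>2 x"])
    show "gauge (\<lambda>x. \<gamma>1 x \<inter> \<gamma>2 x)" using g1(1) g2(1) by (rule gauge_Int)
    fix p assume "p tagged_division_of {a..b}" "(\<lambda>x. \<gamma>1 x \<inter> \<gamma>2 x) fine p"
    then show "\<bar>stieltjes_sum H1 g1 p - I1\<bar> < e \<and> \<bar>stieltjes_sum H2 g2 p - I2\<bar> < e"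
      using g1(2) g2(2) unfolding fine_Int by blast
  qed
qed

text \<open>The integral on \<open>[a, b]\<close> is unique, since fine tagged divisions exist for every gauge.\<close>
lemma hs_on_unique:
  assumes "hs_has_integral_on H g I a b" "hs_has_integral_on H g J a b"
  shows "I = J"
proof (rule ccontr)
  assume "I \<noteq> J"
  then have e: "\<bar>I - J\<bar> / 2 > 0" by simp
  obtain \<gamma> where G: "gauge \<gamma>" "\<And>p. p tagged_division_of {a..b} \<Longrightarrow> \<gamma> fine p \<Longrightarrow>
      \<bar>stieltjes_sum H g p - I\<bar> < \<bar>I - J\<bar> / 2 \<and> \<bar>stieltjes_sum H g p - J\<bar> < \<bar>I - J\<bar> / 2"
    using hs_on_common[OF assms e] by blast
  obtain p where "p tagged_division_of {a..b}" "\<gamma> fine p" using G(1) by (rule fine_division_exists_real)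
  from G(2)[OF this] have "\<bar>I - J\<bar> < 2 * (\<bar>I - J\<bar> / 2)" by linarith
  then show False by simp
qed

lemma hs_on_bound:
  assumes I: "hs_has_integral_on H g I a b" and r: "r > 0"
    and C: "\<And>p. p tagged_division_of {a..b} \<Longrightarrow> (\<lambda>t. ball t r) fine p \<Longrightarrow> \<bar>stieltjes_sum H g p\<bar> \<le> C"
  shows "\<bar>I\<bar> \<le> C"
proof (rule field_le_epsilon)
  fix e :: real assume e: "e > 0"
  obtain \<gamma> where \<gamma>: "gauge \<gamma>" "\<forall>p. p tagged_division_of {a..b} \<and> \<gamma> fine p \<longrightarrow> \<bar>stieltjes_sum H g p - I\<bar> < e"
    using I[unfolded hs_on_iff, rule_format, OF e] by blast
  have "gauge (\<lambda>x. \<gamma> x \<inter> ball x r)" using \<gamma>(1) gauge_ball[OF r] by (rule gauge_Int)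
  then obtain p where p: "p tagged_division_of {a..b}" "(\<lambda>x. \<gamma> x \<inter> ball x r) fine p"
    by (rule fine_division_exists_real)
  then have "\<bar>stieltjes_sum H g p - I\<bar> < e" "\<bar>stieltjes_sum H g p\<bar> \<le> C"
    using \<gamma>(2) C unfolding fine_Int by blast+
  then show "\<bar>I\<bar> \<le> C + e" by linarith
qed

lemma hs_on_lin:
  assumes I1: "hs_has_integral_on H1 g1 I1 a b" and I2: "hs_has_integral_on H2 g2 I2 a b"
    and R: "\<And>p. stieltjes_sum H3 g3 p = \<alpha> * stieltjes_sum H1 g1 p + \<beta> * stieltjes_sum H2 g2 p"
  shows "hs_has_integral_on H3 g3 (\<alpha> * I1 + \<beta> * I2) a b"
  unfolding hs_on_iff
proof (intro allI impI)
  fix e :: real assume e: "e > 0"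
  define e' where "e' = e / (\<bar>\<alpha>\<bar> + \<bar>\<beta>\<bar> + 1)"
  have e': "e' > 0" "(\<bar>\<alpha>\<bar> + \<bar>\<beta>\<bar>) * e' < e"
    using e by (auto simp: e'_def field_simps add_pos_nonneg)
  obtain \<gamma> where G: "gauge \<gamma>" "\<And>p. p tagged_division_of {a..b} \<Longrightarrow> \<gamma> fine p \<Longrightarrow>
      \<bar>stieltjes_sum H1 g1 p - I1\<bar> < e' \<and> \<bar>stieltjes_sum H2 g2 p - I2\<bar> < e'"
    using hs_on_common[OF I1 I2 e'(1)] by blast
  show "\<exists>\<gamma>. gauge \<gamma> \<and> (\<forall>p. p tagged_division_of {a..b} \<and> \<gamma> fine p \<longrightarrow>
      \<bar>stieltjes_sum H3 g3 p - (\<alpha> * I1 + \<beta> * I2)\<bar> < e)"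
  proof (intro exI conjI allI impI)
    fix p assume "p tagged_division_of {a..b} \<and> \<gamma> fine p"
    then have b: "\<bar>stieltjes_sum H1 g1 p - I1\<bar> < e'" "\<bar>stieltjes_sum H2 g2 p - I2\<bar> < e'" using G(2) by blast+
    have "\<bar>stieltjes_sum H3 g3 p - (\<alpha> * I1 + \<beta> * I2)\<bar>
        = \<bar>\<alpha> * (stieltjes_sum H1 g1 p - I1) + \<beta> * (stieltjes_sum H2 g2 p - I2)\<bar>"
      by (simp add: R algebra_simps)
    also have "\<dots> \<le> \<bar>\<alpha>\<bar> * \<bar>stieltjes_sum H1 g1 p - I1\<bar> + \<bar>\<beta>\<bar> * \<bar>stieltjes_sum H2 g2 p - I2\<bar>"
      by (metis abs_mult abs_triangle_ineq)
    also have "\<dots> \<le> (\<bar>\<alpha>\<bar> + \<bar>\<beta>\<bar>) * e'"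
      using b by (simp add: distrib_right add_mono mult_left_mono)
    finally show "\<bar>stieltjes_sum H3 g3 p - (\<alpha> * I1 + \<beta> * I2)\<bar> < e" using e'(2) by linarith
  qed (rule G(1))
qed

lemma stieltjes_sum_lin_H:
  "stieltjes_sum (\<lambda>t. \<alpha> * H1 t + \<beta> * H2 t) g p = \<alpha> * stieltjes_sum H1 g p + \<beta> * stieltjes_sum H2 g p"
  unfolding stieltjes_sum_def sum_distrib_left sum.distrib[symmetric]
  by (rule sum.cong) (auto simp: algebra_simps)

lemma stieltjes_sum_lin_g:
  "stieltjes_sum H (\<lambda>y. \<alpha> * g1 y + \<beta> * g2 y) p = \<alpha> * stieltjes_sum H g1 p + \<beta> * stieltjes_sum H g2 p"
  unfolding stieltjes_sum_def sum_distrib_left sum.distrib[symmetric]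
  by (rule sum.cong) (auto simp: algebra_simps)

text \<open>Fine divisions of adjacent intervals \<open>[a, c]\<close> and \<open>[c, b]\<close> join to a division of \<open>[a, b]\<close>;
  they only share degenerate cells at \<open>c\<close>, so the Stieltjes sums add.\<close>
lemma stieltjes_sum_join:
  assumes ac: "a \<le> c" and cb: "c \<le> b"
    and p1: "p1 tagged_division_of {a..c}" and p2: "p2 tagged_division_of {c..b}"
  shows "(p1 \<union> p2) tagged_division_of {a..b}"
    "stieltjes_sum H g (p1 \<union> p2) = stieltjes_sum H g p1 + stieltjes_sum H g p2"
proof -
  show p: "(p1 \<union> p2) tagged_division_of {a..b}"
  proof (rule tagged_division_Un_interval_real[of p1 a b 1 c p2])
    have "{a..b} \<inter> {x. x \<bullet> 1 \<le> c} = {a..c}" "{a..b} \<inter> {x. c \<le> x \<bullet> 1} = {c..b}"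
      using ac cb by auto
    then show "p1 tagged_division_of {a..b} \<inter> {x. x \<bullet> 1 \<le> c}"
      "p2 tagged_division_of {a..b} \<inter> {x. c \<le> x \<bullet> 1}" using p1 p2 by simp_all
  qed simp
  show "stieltjes_sum H g (p1 \<union> p2) = stieltjes_sum H g p1 + stieltjes_sum H g p2"
    unfolding stieltjes_sum_incr[OF p] stieltjes_sum_incr[OF p1] stieltjes_sum_incr[OF p2]
  proof (rule sum.union_inter_neutral)
    show "finite p1" using tagged_division_ofD(1)[OF p1] .
    show "finite p2" using tagged_division_ofD(1)[OF p2] .
    show "\<forall>u\<in>p1 \<inter> p2. H (fst u) * incr g (snd u) = 0"
    proof
      fix u assume "u \<in> p1 \<inter> p2"
      then obtain c' d' where "snd u = {c'..d'}" "c' \<le> d'" "snd u \<subseteq> {a..c}" "snd u \<subseteq> {c..b}"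
        using tagged_division_cell[OF p1, of "fst u" "snd u"]
          tagged_division_cell[OF p2, of "fst u" "snd u"] by auto
      then have "snd u = {c..c}" by auto
      then show "H (fst u) * incr g (snd u) = 0" using incr_degenerate[of c c g] by simp
    qed
  qed
qed

lemma hs_on_add:
  assumes ac: "a \<le> c" and cb: "c \<le> b"
    and I: "hs_has_integral_on H g I a b" and I1: "hs_has_integral_on H g I1 a c"
    and I2: "hs_has_integral_on H g I2 c b"
  shows "I = I1 + I2"
proof (rule ccontr)
  assume "I \<noteq> I1 + I2"
  then have e: "\<bar>I - (I1 + I2)\<bar> / 3 > 0" by simp
  let ?e = "\<bar>I - (I1 + I2)\<bar> / 3"
  obtain \<gamma> where \<gamma>: "gauge \<gamma>" "\<forall>p. p tagged_division_of {a..b} \<and> \<gamma> fine p \<longrightarrow> \<bar>stieltjes_sum H g p - I\<bar> < ?e"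
    using I[unfolded hs_on_iff, rule_format, OF e] by blast
  obtain \<gamma>1 where \<gamma>1: "gauge \<gamma>1" "\<forall>p. p tagged_division_of {a..c} \<and> \<gamma>1 fine p \<longrightarrow> \<bar>stieltjes_sum H g p - I1\<bar> < ?e"
    using I1[unfolded hs_on_iff, rule_format, OF e] by blast
  obtain \<gamma>2 where \<gamma>2: "gauge \<gamma>2" "\<forall>p. p tagged_division_of {c..b} \<and> \<gamma>2 fine p \<longrightarrow> \<bar>stieltjes_sum H g p - I2\<bar> < ?e"
    using I2[unfolded hs_on_iff, rule_format, OF e] by blast
  have G: "gauge (\<lambda>x. \<gamma> x \<inter> (\<gamma>1 x \<inter> \<gamma>2 x))" using \<gamma>(1) \<gamma>1(1) \<gamma>2(1) by (intro gauge_Int)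
  obtain p1 where p1: "p1 tagged_division_of {a..c}" "(\<lambda>x. \<gamma> x \<inter> (\<gamma>1 x \<inter> \<gamma>2 x)) fine p1"
    using G by (rule fine_division_exists_real)
  obtain p2 where p2: "p2 tagged_division_of {c..b}" "(\<lambda>x. \<gamma> x \<inter> (\<gamma>1 x \<inter> \<gamma>2 x)) fine p2"
    using G by (rule fine_division_exists_real)
  note join = stieltjes_sum_join[OF ac cb p1(1) p2(1)]
  have "\<gamma> fine (p1 \<union> p2)" "\<gamma>1 fine p1" "\<gamma>2 fine p2"
    using fine_Un[OF p1(2) p2(2)] p1(2) p2(2) unfolding fine_Int by auto
  then have "\<bar>stieltjes_sum H g (p1 \<union> p2) - I\<bar> < ?e" "\<bar>stieltjes_sum H g p1 - I1\<bar> < ?e"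
    "\<bar>stieltjes_sum H g p2 - I2\<bar> < ?e"
    using \<gamma>(2) \<gamma>1(2) \<gamma>2(2) join(1) p1(1) p2(1) by auto
  then have "\<bar>I - (I1 + I2)\<bar> < 3 * ?e" using join(2)[of H g] by linarith
  then show False by simp
qed

definition hs_integral_on :: "(real \<Rightarrow> real) \<Rightarrow> (real \<Rightarrow> real) \<Rightarrow> real \<Rightarrow> real \<Rightarrow> real" where
  "hs_integral_on H g a b = (THE I. hs_has_integral_on H g I a b)"

lemma hs_integral_on_eq: "hs_has_integral_on H g I a b \<Longrightarrow> hs_integral_on H g a b = I"
  unfolding hs_integral_on_def by (rule the_equality) (auto intro: hs_on_unique)

lemma hs_integral_on:
  assumes "continuous_on UNIV H" "g \<in> BV"
  shows "hs_has_integral_on H g (hs_integral_on H g a b) a b"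
  using hs_on_exists[OF continuous_on_subset[OF assms(1)] assms(2)] hs_integral_on_eq by fastforce

lemma hs_integral_on_add:
  assumes "a \<le> c" "c \<le> b" "continuous_on UNIV H" "g \<in> BV"
  shows "hs_integral_on H g a b = hs_integral_on H g a c + hs_integral_on H g c b"
  by (rule hs_on_add[OF assms(1,2) hs_integral_on hs_integral_on hs_integral_on]) (use assms in auto)

lemma hs_integral_on_bound:
  assumes H: "continuous_on UNIV H" and g: "g \<in> BV"
    and HB: "\<And>t. t \<in> {a..b} \<Longrightarrow> \<bar>H t\<bar> \<le> B" and B0: "0 \<le> B"
  shows "\<bar>hs_integral_on H g a b\<bar> \<le> B * variation g"
  by (rule hs_on_bound[OF hs_integral_on[OF H g], of 1]) (auto intro: stieltjes_sum_bound[OF _ HB B0 g])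

lemma hs_integral_on_bound_tail:
  assumes H: "continuous_on UNIV H" and g: "g \<in> BV" and out: "b \<le> m \<or> M \<le> a"
    and HB: "\<And>t. \<bar>H t\<bar> \<le> B" and B0: "0 \<le> B"
    and T: "\<And>(A::(real \<times> real set) set) x y. disjoint_ivls A x y \<Longrightarrow>
             (\<forall>i\<in>A. y i \<le> m \<or> M \<le> x i) \<Longrightarrow> (\<Sum>i\<in>A. \<bar>g (y i) - g (x i)\<bar>) \<le> T"
  shows "\<bar>hs_integral_on H g a b\<bar> \<le> B * T"
  by (rule hs_on_bound[OF hs_integral_on[OF H g], of 1])
    (auto intro: stieltjes_sum_bound_tail[OF _ out _ B0 T] HB)

lemma hs_integral_on_bound_split:
  assumes H: "continuous_on UNIV H" and g: "g \<in> BV" and r: "r > 0"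
    and HB: "\<And>t. \<bar>H t\<bar> \<le> B" and HB1: "\<And>t. m - r \<le> t \<Longrightarrow> t \<le> M + r \<Longrightarrow> \<bar>H t\<bar> \<le> B1"
    and B0: "0 \<le> B" and B10: "0 \<le> B1"
    and T: "\<And>(A::(real \<times> real set) set) x y. disjoint_ivls A x y \<Longrightarrow>
             (\<forall>i\<in>A. y i \<le> m \<or> M \<le> x i) \<Longrightarrow> (\<Sum>i\<in>A. \<bar>g (y i) - g (x i)\<bar>) \<le> T"
  shows "\<bar>hs_integral_on H g a b\<bar> \<le> B1 * variation g + B * T"
  by (rule hs_on_bound[OF hs_integral_on[OF H g] r])
    (rule stieltjes_sum_bound_split[OF _ _ HB HB1 B0 B10 g T])

text \<open>The improper integral over the line is the limit along \<open>a \<rightarrow> -\<infinity>, b \<rightarrow> \<infinity>\<close>, i.e. along the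
  filter \<open>at_bot \<times>\<^sub>F at_top\<close> of windows \<open>[a, b]\<close>.\<close>
lemma eventually_window: "eventually (\<lambda>w. fst w \<le> m \<and> M \<le> snd w) (at_bot \<times>\<^sub>F at_top :: (real \<times> real) filter)"
  by (rule eventually_prodI) (simp_all add: eventually_le_at_bot eventually_ge_at_top)

lemma window_filter_nontrivial: "(at_bot \<times>\<^sub>F at_top :: (real \<times> real) filter) \<noteq> bot"
  by (simp add: prod_filter_eq_bot)

lemma hs_integral_eqI:
  assumes H: "continuous_on UNIV H" and g: "g \<in> BV"
    and I: "((\<lambda>(a, b). hs_integral_on H g a b) \<longlongrightarrow> I) (at_bot \<times>\<^sub>F at_top)"
  shows "hs_integral H g = I"
  unfolding hs_integral_def
proof (rule the_equality)
  show "hs_has_integral H g I"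
    unfolding hs_has_integral_def using I hs_integral_on[OF H g] by blast
  fix I' assume "hs_has_integral H g I'"
  then obtain J where J: "\<And>a b. a \<le> b \<Longrightarrow> hs_has_integral_on H g (J a b) a b"
    "((\<lambda>(a, b). J a b) \<longlongrightarrow> I') (at_bot \<times>\<^sub>F at_top)"
    unfolding hs_has_integral_def by blast
  have ev: "eventually (\<lambda>w. (\<lambda>(a, b). J a b) w = (\<lambda>(a, b). hs_integral_on H g a b) w) (at_bot \<times>\<^sub>F at_top)"
    using eventually_window[of 0 0]
    by eventually_elim (auto simp: hs_integral_on_eq[OF J(1)])
  have "((\<lambda>(a, b). hs_integral_on H g a b) \<longlongrightarrow> I') (at_bot \<times>\<^sub>F at_top)"
    using tendsto_cong[OF ev] J(2) by simp
  then show "I' = I" using tendsto_unique[OF window_filter_nontrivial _ I] by blast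
qed

text \<open>The window integrals of a bounded continuous \<open>H\<close> converge: by additivity, enlarging a window
  beyond \<open>[m, M]\<close> only adds integrals over intervals outside \<open>]m, M[\<close>, which the tail bound makes
  small.\<close>
lemma hs_integral_on_tendsto:
  assumes H: "continuous_on UNIV H" and HB: "\<And>t. \<bar>H t\<bar> \<le> B" and g: "g \<in> BV"
  shows "((\<lambda>(a, b). hs_integral_on H g a b) \<longlongrightarrow> hs_integral H g) (at_bot \<times>\<^sub>F at_top)"
proof -
  let ?J = "\<lambda>(a, b). hs_integral_on H g a b"
  have B0: "0 \<le> B" using HB[of 0] by linarith
  have "\<exists>I. (?J \<longlongrightarrow> I) (at_bot \<times>\<^sub>F at_top)"
  proof (rule real_cauchy_limit)
    fix e :: real assume e: "e > 0"
    define \<epsilon> where "\<epsilon> = e / (4 * B + 1)"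
    have \<epsilon>: "\<epsilon> > 0" "4 * B * \<epsilon> \<le> e"
      using e B0 by (auto simp: \<epsilon>_def field_simps)
    obtain m M where "m \<le> M" and tail: "\<And>(A::(real \<times> real set) set) x y. disjoint_ivls A x y \<Longrightarrow>
        (\<forall>i\<in>A. y i \<le> m \<or> M \<le> x i) \<Longrightarrow> (\<Sum>i\<in>A. \<bar>g (y i) - g (x i)\<bar>) \<le> \<epsilon>"
      using BV_tail[where 'i="real \<times> real set", OF g \<epsilon>(1)] by blast
    have near: "\<bar>?J w - hs_integral_on H g m M\<bar> \<le> 2 * B * \<epsilon>" if "fst w \<le> m \<and> M \<le> snd w" for w
    proof -
      obtain a b where w: "w = (a, b)" by (cases w)
      then have ab: "a \<le> m" "M \<le> b" using that by auto
      have "hs_integral_on H g a b = hs_integral_on H g a m + (hs_integral_on H g m M + hs_integral_on H g M b)"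
        using hs_integral_on_add[OF ab(1) _ H g, of b] hs_integral_on_add[OF \<open>m \<le> M\<close> ab(2) H g] ab \<open>m \<le> M\<close>
        by simp
      moreover have "\<bar>hs_integral_on H g a m\<bar> \<le> B * \<epsilon>" "\<bar>hs_integral_on H g M b\<bar> \<le> B * \<epsilon>"
        by (rule hs_integral_on_bound_tail[OF H g _ HB B0 tail]; simp)+
      ultimately show ?thesis using w(1) by simp
    qed
    have "\<bar>?J w - ?J w'\<bar> \<le> e" if "fst w \<le> m \<and> M \<le> snd w" "fst w' \<le> m \<and> M \<le> snd w'" for w w'
      using near[OF that(1)] near[OF that(2)] \<epsilon>(2) by linarith
    then show "\<exists>P. eventually P (at_bot \<times>\<^sub>F at_top) \<and> (\<forall>w w'. P w \<and> P w' \<longrightarrow> \<bar>?J w - ?J w'\<bar> \<le> e)"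
      using eventually_window by blast
  qed
  then show ?thesis using hs_integral_eqI[OF H g] by auto
qed

lemma hs_integral_bound_from_windows:
  assumes H: "continuous_on UNIV H" and HB: "\<And>t. \<bar>H t\<bar> \<le> B" and g: "g \<in> BV"
    and C: "\<And>a b. a \<le> b \<Longrightarrow> \<bar>hs_integral_on H g a b\<bar> \<le> C"
  shows "\<bar>hs_integral H g\<bar> \<le> C"
proof (rule tendsto_upperbound[OF _ _ window_filter_nontrivial])
  show "((\<lambda>w. \<bar>(\<lambda>(a, b). hs_integral_on H g a b) w\<bar>) \<longlongrightarrow> \<bar>hs_integral H g\<bar>) (at_bot \<times>\<^sub>F at_top)"
    by (intro tendsto_intros hs_integral_on_tendsto[OF H HB g])
  show "\<forall>\<^sub>F w in at_bot \<times>\<^sub>F at_top. \<bar>(\<lambda>(a, b). hs_integral_on H g a b) w\<bar> \<le> C"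
    using eventually_window[of 0 0] by eventually_elim (auto intro: C)
qed

lemma hs_integral_bound:
  assumes H: "continuous_on UNIV H" and HB: "\<And>t. \<bar>H t\<bar> \<le> B" and g: "g \<in> BV"
  shows "\<bar>hs_integral H g\<bar> \<le> B * variation g"
  using HB[of 0] by (intro hs_integral_bound_from_windows[OF H HB g] hs_integral_on_bound[OF H g HB]) auto

lemma hs_integral_bound_split:
  assumes H: "continuous_on UNIV H" and g: "g \<in> BV" and r: "r > 0"
    and HB: "\<And>t. \<bar>H t\<bar> \<le> B" and HB1: "\<And>t. m - r \<le> t \<Longrightarrow> t \<le> M + r \<Longrightarrow> \<bar>H t\<bar> \<le> B1"
    and B10: "0 \<le> B1"
    and T: "\<And>(A::(real \<times> real set) set) x y. disjoint_ivls A x y \<Longrightarrow>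
             (\<forall>i\<in>A. y i \<le> m \<or> M \<le> x i) \<Longrightarrow> (\<Sum>i\<in>A. \<bar>g (y i) - g (x i)\<bar>) \<le> T"
  shows "\<bar>hs_integral H g\<bar> \<le> B1 * variation g + B * T"
  using HB[of 0]
  by (intro hs_integral_bound_from_windows[OF H HB g] hs_integral_on_bound_split[OF H g r HB HB1 _ B10 T]) auto

lemma hs_integral_lin:
  assumes H1: "continuous_on UNIV H1" "\<And>t. \<bar>H1 t\<bar> \<le> C1" "g1 \<in> BV"
    and H2: "continuous_on UNIV H2" "\<And>t. \<bar>H2 t\<bar> \<le> C2" "g2 \<in> BV"
    and H3: "continuous_on UNIV H3" "g3 \<in> BV"
    and R: "\<And>p. stieltjes_sum H3 g3 p = \<alpha> * stieltjes_sum H1 g1 p + \<beta> * stieltjes_sum H2 g2 p"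
  shows "hs_integral H3 g3 = \<alpha> * hs_integral H1 g1 + \<beta> * hs_integral H2 g2"
proof -
  let ?J = "\<lambda>H g. \<lambda>(a, b). hs_integral_on H g a b"
  have "((\<lambda>w. \<alpha> * ?J H1 g1 w + \<beta> * ?J H2 g2 w) \<longlongrightarrow> \<alpha> * hs_integral H1 g1 + \<beta> * hs_integral H2 g2)
      (at_bot \<times>\<^sub>F at_top)"
    by (intro tendsto_add tendsto_mult_left hs_integral_on_tendsto[OF H1] hs_integral_on_tendsto[OF H2])
  moreover have "\<forall>w. \<alpha> * ?J H1 g1 w + \<beta> * ?J H2 g2 w = ?J H3 g3 w"
    using hs_integral_on_eq[OF hs_on_lin[OF hs_integral_on[OF H1(1,3)] hs_integral_on[OF H2(1,3)] R]]
    by auto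
  ultimately have "(?J H3 g3 \<longlongrightarrow> \<alpha> * hs_integral H1 g1 + \<beta> * hs_integral H2 g2) (at_bot \<times>\<^sub>F at_top)"
    by simp
  then show ?thesis by (rule hs_integral_eqI[OF H3])
qed

lemma hs_integral_lin_H:
  assumes H1: "continuous_on UNIV H1" "\<And>t. \<bar>H1 t\<bar> \<le> C1"
    and H2: "continuous_on UNIV H2" "\<And>t. \<bar>H2 t\<bar> \<le> C2" and g: "g \<in> BV"
  shows "hs_integral (\<lambda>t. \<alpha> * H1 t + \<beta> * H2 t) g = \<alpha> * hs_integral H1 g + \<beta> * hs_integral H2 g"
  using H1(1) H2(1)
  by (intro hs_integral_lin[OF H1 g H2 g _ g stieltjes_sum_lin_H] continuous_intros)

lemma hs_integral_one:
  assumes g: "g \<in> BV"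
  shows "hs_integral (\<lambda>_. 1) g = at_pinf g - at_minf g"
proof -
  have J1: "hs_integral_on (\<lambda>_. 1) g a b = g b - g a" if ab: "a \<le> b" for a b
  proof (rule hs_integral_on_eq)
    show "hs_has_integral_on (\<lambda>_. 1) g (g b - g a) a b"
      unfolding hs_on_iff
    proof (intro allI impI exI conjI)
      fix e :: real and p assume "e > 0" and p: "p tagged_division_of {a..b} \<and> (\<lambda>x. ball x 1) fine p"
      then show "\<bar>stieltjes_sum (\<lambda>_. 1) g p - (g b - g a)\<bar> < e"
        using additive_tagged_division_1[OF ab, of p g] by (simp add: stieltjes_sum_def)
    qed (rule gauge_ball, simp)
  qed
  have "((\<lambda>w. g (snd w) - g (fst w)) \<longlongrightarrow> at_pinf g - at_minf g) (at_bot \<times>\<^sub>F at_top)"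
    by (intro tendsto_diff filterlim_compose[OF BV_tendsto_pinf[OF g] filterlim_snd]
        filterlim_compose[OF BV_tendsto_minf[OF g] filterlim_fst])
  moreover have "eventually (\<lambda>w. g (snd w) - g (fst w) = (\<lambda>(a, b). hs_integral_on (\<lambda>_. 1) g a b) w)
      (at_bot \<times>\<^sub>F at_top)"
    using eventually_window[of 0 0] by eventually_elim (auto simp: J1)
  ultimately have "((\<lambda>(a, b). hs_integral_on (\<lambda>_. 1) g a b) \<longlongrightarrow> at_pinf g - at_minf g) (at_bot \<times>\<^sub>F at_top)"
    by (rule tendsto_cong[THEN iffD1, rotated])
  then show ?thesis by (rule hs_integral_eqI[OF continuous_on_const g])
qed

text \<open>A dominated convergence principle: if a bounded family of integrands tends to \<open>0\<close>
  uniformly on compact sets, the integrals tend to \<open>0\<close>, because the variation of \<open>g\<close> outside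
  a compact window is small.\<close>
lemma hs_integral_tendsto_zero:
  assumes g: "g \<in> BV" and cont: "\<And>x. continuous_on UNIV (K x)" and bnd: "\<And>x t. \<bar>K x t\<bar> \<le> B"
    and loc: "\<And>c d e. e > 0 \<Longrightarrow> eventually (\<lambda>x. \<forall>t\<in>{c..d}. \<bar>K x t\<bar> \<le> e) F"
  shows "((\<lambda>x. hs_integral (K x) g) \<longlongrightarrow> 0) F"
proof (rule tendstoI)
  fix e :: real assume e: "e > 0"
  have B0: "0 \<le> B" using bnd[of undefined 0] by linarith
  define \<epsilon> where "\<epsilon> = e / (variation g + B + 1)"
  have V0: "0 \<le> variation g" by (rule variation_nonneg[OF g])
  have den: "variation g + B + 1 > 0" using V0 B0 by simp
  have "\<epsilon> * (variation g + B + 1) = e" using den by (simp add: \<epsilon>_def)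
  then have "\<epsilon> * variation g + B * \<epsilon> + \<epsilon> = e" by (simp add: algebra_simps)
  moreover have "\<epsilon> > 0" using e den by (simp add: \<epsilon>_def)
  ultimately have \<epsilon>: "\<epsilon> > 0" "\<epsilon> * variation g + B * \<epsilon> < e" by linarith+
  obtain m M where "m \<le> M" and tail: "\<And>(A::(real \<times> real set) set) x y. disjoint_ivls A x y \<Longrightarrow>
      (\<forall>i\<in>A. y i \<le> m \<or> M \<le> x i) \<Longrightarrow> (\<Sum>i\<in>A. \<bar>g (y i) - g (x i)\<bar>) \<le> \<epsilon>"
    using BV_tail[where 'i="real \<times> real set", OF g \<epsilon>(1)] by blast
  show "eventually (\<lambda>x. dist (hs_integral (K x) g) 0 < e) F"
    using loc[OF \<epsilon>(1), of "m - 1" "M + 1"]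
  proof eventually_elim
    case (elim x)
    have "\<bar>hs_integral (K x) g\<bar> \<le> \<epsilon> * variation g + B * \<epsilon>"
      by (rule hs_integral_bound_split[where r=1, OF cont g _ bnd _ _ tail]) (use elim \<epsilon> in auto)
    then show ?case using \<epsilon>(2) by simp
  qed
qed

lemma B_C_props:
  assumes "F \<in> B_C"
  shows "continuous_on UNIV F" "(F \<longlongrightarrow> at_pinf F) at_top" "(F \<longlongrightarrow> 0) at_bot"
  using assms lim_at_pinf unfolding B_C_def by auto

lemma B_C_tails:
  assumes "F \<in> B_C" "\<epsilon> > 0"
  obtains m M where "\<And>t. t \<le> m \<Longrightarrow> \<bar>F t\<bar> < \<epsilon>" "\<And>t. M \<le> t \<Longrightarrow> \<bar>F t - at_pinf F\<bar> < \<epsilon>"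
proof -
  note P = B_C_props[OF assms(1)]
  obtain M where "\<And>t. M \<le> t \<Longrightarrow> \<bar>F t - at_pinf F\<bar> < \<epsilon>"
    using P(2)[THEN tendstoD, OF assms(2)] unfolding eventually_at_top_linorder dist_real_def by auto
  moreover obtain m where "\<And>t. t \<le> m \<Longrightarrow> \<bar>F t\<bar> < \<epsilon>"
    using P(3)[THEN tendstoD, OF assms(2)] unfolding eventually_at_bot_linorder dist_real_def by auto
  ultimately show ?thesis using that by blast
qed

text \<open>Boundedness: by the tails outside a compact interval and by compactness on it.\<close>
lemma B_C_bounded:
  assumes F: "F \<in> B_C"
  obtains B where "\<And>t. \<bar>F t\<bar> \<le> B"
proof -
  obtain m M where m: "\<And>t. t \<le> m \<Longrightarrow> \<bar>F t\<bar> < 1" and M: "\<And>t. M \<le> t \<Longrightarrow> \<bar>F t - at_pinf F\<bar> < 1"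
    using B_C_tails[OF F zero_less_one] by blast
  have "compact (F ` {m..M})"
    by (rule compact_continuous_image[OF continuous_on_subset[OF B_C_props(1)[OF F]]]) auto
  then obtain K where K: "\<forall>y\<in>F ` {m..M}. \<bar>y\<bar> \<le> K"
    using compact_imp_bounded bounded_real by metis
  have "\<bar>F t\<bar> \<le> \<bar>K\<bar> + \<bar>at_pinf F\<bar> + 1" for t
  proof -
    consider "t \<le> m" | "M \<le> t" | "t \<in> {m..M}" by force
    then show ?thesis
    proof cases
      case 3 then show ?thesis using K by force
    qed (use m[of t] M[of t] in linarith)+
  qed
  then show ?thesis using that by blast
qed

text \<open>Uniform continuity: by the tails outside a compact interval and by compactness on it.\<close>
lemma B_C_uniformly_continuous:
  assumes F: "F \<in> B_C" and e: "\<epsilon> > 0"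
  obtains \<delta> where "\<delta> > 0" "\<And>s t. \<bar>s - t\<bar> < \<delta> \<Longrightarrow> \<bar>F s - F t\<bar> \<le> \<epsilon>"
proof -
  obtain m M where m: "\<And>t. t \<le> m \<Longrightarrow> \<bar>F t\<bar> < \<epsilon>/2" and M: "\<And>t. M \<le> t \<Longrightarrow> \<bar>F t - at_pinf F\<bar> < \<epsilon>/2"
    using B_C_tails[OF F] e by (metis half_gt_zero)
  have "uniformly_continuous_on {m-1..M+1} F"
    by (rule compact_uniformly_continuous[OF continuous_on_subset[OF B_C_props(1)[OF F]]]) auto
  then obtain d where d: "d > 0"
    "\<forall>x\<in>{m-1..M+1}. \<forall>x'\<in>{m-1..M+1}. dist x' x < d \<longrightarrow> dist (F x') (F x) < \<epsilon>"
    using e unfolding uniformly_continuous_on_def by blast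
  show ?thesis
  proof (rule that[of "min d 1"])
    fix s t assume st: "\<bar>s - t\<bar> < min d 1"
    show "\<bar>F s - F t\<bar> \<le> \<epsilon>"
    proof (cases "s \<in> {m-1..M+1} \<and> t \<in> {m-1..M+1}")
      case True
      then show ?thesis using d(2) st by (force simp: dist_real_def)
    next
      case False
      then have "(M \<le> s \<and> M \<le> t) \<or> (s \<le> m \<and> t \<le> m)" using st by auto
      then show ?thesis
      proof
        assume "M \<le> s \<and> M \<le> t" then show ?thesis using M[of s] M[of t] by linarith
      next
        assume "s \<le> m \<and> t \<le> m" then show ?thesis using m[of s] m[of t] by linarith
      qed
    qed
  qed (use d(1) in simp)
qed

text \<open>The Alexiewicz norm dominates the oscillation, the values (since \<open>F (-\<infinity>) = 0\<close>) and the
  value at \<open>+\<infinity>\<close> of the primitive.\<close>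
lemma alex_upper:
  assumes F: "F \<in> B_C"
  shows "\<bar>F b - F a\<bar> \<le> alex F"
proof -
  obtain B where B: "\<And>t. \<bar>F t\<bar> \<le> B" using B_C_bounded[OF F] by blast
  have "bdd_above {\<bar>F b - F a\<bar> | a b. a \<le> b}"
  proof (rule bdd_aboveI)
    fix s assume "s \<in> {\<bar>F b - F a\<bar> | a b. a \<le> b}"
    then obtain a b where "s = \<bar>F b - F a\<bar>" by blast
    then show "s \<le> 2 * B" using B[of a] B[of b] by linarith
  qed
  moreover have "\<bar>F b - F a\<bar> \<in> {\<bar>F b - F a\<bar> | a b. a \<le> b}"
    by (cases "a \<le> b") (force simp: abs_minus_commute)+
  ultimately show ?thesis unfolding alex_def by (rule cSup_upper[rotated])
qed

lemma alex_pt: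
  assumes F: "F \<in> B_C"
  shows "\<bar>F t\<bar> \<le> alex F"
proof (rule tendsto_upperbound)
  show "((\<lambda>a. \<bar>F t - F a\<bar>) \<longlongrightarrow> \<bar>F t\<bar>) at_bot"
    using tendsto_intros(11)[OF tendsto_diff[OF tendsto_const B_C_props(3)[OF F]]] by simp
  show "\<forall>\<^sub>F a in at_bot. \<bar>F t - F a\<bar> \<le> alex F" using alex_upper[OF F] by simp
qed simp

lemma alex_pinf:
  assumes F: "F \<in> B_C"
  shows "\<bar>at_pinf F\<bar> \<le> alex F"
proof (rule tendsto_upperbound)
  show "((\<lambda>t. \<bar>F t\<bar>) \<longlongrightarrow> \<bar>at_pinf F\<bar>) at_top"
    by (intro tendsto_intros B_C_props(2)[OF F])
  show "\<forall>\<^sub>F t in at_top. \<bar>F t\<bar> \<le> alex F" using alex_pt[OF F] by simp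
qed simp

lemma B_C_lin:
  assumes F: "F \<in> B_C" and G: "G \<in> B_C"
  shows "(\<lambda>y. a * F y + b * G y) \<in> B_C"
    "at_pinf (\<lambda>y. a * F y + b * G y) = a * at_pinf F + b * at_pinf G"
proof -
  note PF = B_C_props[OF F] and PG = B_C_props[OF G]
  have t: "((\<lambda>y. a * F y + b * G y) \<longlongrightarrow> a * at_pinf F + b * at_pinf G) at_top"
    by (intro tendsto_intros PF(2) PG(2))
  have "((\<lambda>y. a * F y + b * G y) \<longlongrightarrow> a * 0 + b * 0) at_bot"
    by (intro tendsto_intros PF(3) PG(3))
  moreover have "continuous_on UNIV (\<lambda>y. a * F y + b * G y)"
    using PF(1) PG(1) by (intro continuous_intros)
  ultimately show "(\<lambda>y. a * F y + b * G y) \<in> B_C" unfolding B_C_def using t by auto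
  show "at_pinf (\<lambda>y. a * F y + b * G y) = a * at_pinf F + b * at_pinf G" using lim_at_pinf[OF t] .
qed

lemma continuous_reflect:
  fixes F :: "real \<Rightarrow> real"
  shows "continuous_on UNIV F \<Longrightarrow> continuous_on UNIV (\<lambda>y. F (x - y))"
  by (rule continuous_on_compose2[of UNIV F]) (auto intro!: continuous_intros)

definition conv_integral :: "(real \<Rightarrow> real) \<Rightarrow> (real \<Rightarrow> real) \<Rightarrow> real \<Rightarrow> real" where
  "conv_integral F g x = hs_integral (\<lambda>y. F (x - y)) g"

text \<open>Integration by parts turns the convolution into a constant plus the Stieltjes integral of the
  reflected primitive: \<open>f * g (x) = F(\<infinity>) g(-\<infinity>) + \<integral> F (x - y) dg(y)\<close>.\<close>
lemma conv_eq:
  assumes F: "F \<in> B_C" and g: "g \<in> BV"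
  shows "conv F g x = at_pinf F * at_minf g + conv_integral F g x"
proof -
  note P = B_C_props[OF F]
  obtain B where B: "\<And>t. \<bar>F t\<bar> \<le> B" using B_C_bounded[OF F] by blast
  let ?Fi = "at_pinf F"
  let ?H = "\<lambda>y. ?Fi - F (x - y)"
  have "filterlim (\<lambda>y::real. x - y) at_bot at_top"
    unfolding filterlim_at_bot eventually_at_top_linorder by (metis diff_le_eq add.commute)
  then have "(?H \<longlongrightarrow> ?Fi - 0) at_top"
    by (intro tendsto_intros filterlim_compose[OF P(3)])
  then have Hinf: "at_pinf ?H = ?Fi" by (simp add: lim_at_pinf)
  have "hs_integral (\<lambda>y. ?Fi * 1 + (-1) * F (x - y)) g
      = ?Fi * hs_integral (\<lambda>_. 1) g + (-1) * hs_integral (\<lambda>y. F (x - y)) g"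
    by (rule hs_integral_lin_H[OF _ _ continuous_reflect[OF P(1)] B g]) auto
  then show ?thesis
    unfolding conv_def Let_def Hinf hs_integral_one[OF g] conv_integral_def by (simp add: algebra_simps)
qed

lemma conv_integral_diff:
  assumes F: "F \<in> B_C" and g: "g \<in> BV"
  shows "conv_integral F g x - conv_integral F g x' = hs_integral (\<lambda>y. F (x - y) - F (x' - y)) g"
proof -
  obtain B where B: "\<And>t. \<bar>F t\<bar> \<le> B" using B_C_bounded[OF F] by blast
  note cont = continuous_reflect[OF B_C_props(1)[OF F]]
  have "hs_integral (\<lambda>y. 1 * F (x - y) + (-1) * F (x' - y)) g
      = 1 * hs_integral (\<lambda>y. F (x - y)) g + (-1) * hs_integral (\<lambda>y. F (x' - y)) g"
    by (rule hs_integral_lin_H[OF cont B cont B g])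
  then show ?thesis unfolding conv_integral_def by simp
qed

text \<open>The convolution integral is uniformly continuous, by uniform continuity of \<open>F\<close> and the
  bound \<open>|\<integral> H dg| \<le> sup |H| \<cdot> V g\<close>.\<close>
lemma conv_integral_uniformly_continuous:
  assumes F: "F \<in> B_C" and g: "g \<in> BV"
  shows "uniformly_continuous_on UNIV (conv_integral F g)"
  unfolding uniformly_continuous_on_def
proof (intro allI impI)
  fix e :: real assume e: "e > 0"
  define \<epsilon> where "\<epsilon> = e / (variation g + 1)"
  have V0: "0 \<le> variation g" by (rule variation_nonneg[OF g])
  have "\<epsilon> * (variation g + 1) = e" using V0 by (simp add: \<epsilon>_def)
  moreover have "\<epsilon> > 0" using e V0 by (simp add: \<epsilon>_def)
  ultimately have \<epsilon>: "\<epsilon> > 0" "\<epsilon> * variation g < e" by (simp_all add: algebra_simps)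
  obtain \<delta> where "\<delta> > 0" and \<delta>: "\<And>s t. \<bar>s - t\<bar> < \<delta> \<Longrightarrow> \<bar>F s - F t\<bar> \<le> \<epsilon>"
    using B_C_uniformly_continuous[OF F \<epsilon>(1)] by blast
  show "\<exists>d>0. \<forall>x\<in>UNIV. \<forall>x'\<in>UNIV. dist x' x < d \<longrightarrow> dist (conv_integral F g x') (conv_integral F g x) < e"
  proof (intro exI conjI ballI impI)
    fix x x' :: real assume "dist x' x < \<delta>"
    then have "\<bar>F (x' - y) - F (x - y)\<bar> \<le> \<epsilon>" for y using \<delta> by (simp add: dist_real_def)
    then have "\<bar>hs_integral (\<lambda>y. F (x' - y) - F (x - y)) g\<bar> \<le> \<epsilon> * variation g"
      using continuous_reflect[OF B_C_props(1)[OF F]]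
      by (intro hs_integral_bound[OF _ _ g]) (auto intro: continuous_intros)
    then show "dist (conv_integral F g x') (conv_integral F g x) < e"
      using \<epsilon>(2) by (simp add: dist_real_def conv_integral_diff[OF F g])
  qed (rule \<open>\<delta> > 0\<close>)
qed

text \<open>As \<open>x \<rightarrow> +\<infinity>\<close> the reflected translates \<open>F (x - \<cdot>)\<close> tend to \<open>F(\<infinity>)\<close> uniformly on compacts,
  and as \<open>x \<rightarrow> -\<infinity>\<close> to \<open>0\<close>; by dominated convergence the convolution has limits at \<open>\<plusminus>\<infinity>\<close>.\<close>
lemma conv_integral_tendsto_pinf:
  assumes F: "F \<in> B_C" and g: "g \<in> BV"
  shows "(conv_integral F g \<longlongrightarrow> at_pinf F * (at_pinf g - at_minf g)) at_top"
proof (rule LIM_zero_cancel)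
  let ?Fi = "at_pinf F"
  obtain B where B: "\<And>t. \<bar>F t\<bar> \<le> B" using B_C_bounded[OF F] by blast
  note cont = continuous_reflect[OF B_C_props(1)[OF F]]
  have "hs_integral (\<lambda>y. F (x - y) - ?Fi) g = conv_integral F g x - ?Fi * (at_pinf g - at_minf g)" for x
  proof -
    have "hs_integral (\<lambda>y. 1 * F (x - y) + (- ?Fi) * 1) g
        = 1 * hs_integral (\<lambda>y. F (x - y)) g + (- ?Fi) * hs_integral (\<lambda>_. 1) g"
      by (rule hs_integral_lin_H[OF cont B _ _ g]) auto
    then show ?thesis unfolding conv_integral_def hs_integral_one[OF g] by simp
  qed
  moreover have "((\<lambda>x. hs_integral (\<lambda>y. F (x - y) - ?Fi) g) \<longlongrightarrow> 0) at_top"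
  proof (rule hs_integral_tendsto_zero[OF g])
    show "continuous_on UNIV (\<lambda>y. F (x - y) - ?Fi)" for x using cont by (intro continuous_intros)
    show "\<bar>F (x - t) - ?Fi\<bar> \<le> B + \<bar>?Fi\<bar>" for x t using B[of "x - t"] by linarith
    fix c d e :: real assume "e > 0"
    then obtain M where M: "\<And>t. M \<le> t \<Longrightarrow> \<bar>F t - ?Fi\<bar> < e" using B_C_tails[OF F] by metis
    show "eventually (\<lambda>x. \<forall>t\<in>{c..d}. \<bar>F (x - t) - ?Fi\<bar> \<le> e) at_top"
      using eventually_ge_at_top[of "M + d"] by eventually_elim (auto intro!: less_imp_le[OF M])
  qed
  ultimately show "((\<lambda>x. conv_integral F g x - ?Fi * (at_pinf g - at_minf g)) \<longlongrightarrow> 0) at_top"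
    by simp
qed

lemma conv_integral_tendsto_minf:
  assumes F: "F \<in> B_C" and g: "g \<in> BV"
  shows "(conv_integral F g \<longlongrightarrow> 0) at_bot"
proof -
  obtain B where B: "\<And>t. \<bar>F t\<bar> \<le> B" using B_C_bounded[OF F] by blast
  show ?thesis
    unfolding conv_integral_def
  proof (rule hs_integral_tendsto_zero[OF g continuous_reflect[OF B_C_props(1)[OF F]] B])
    fix c d e :: real assume "e > 0"
    then obtain m where m: "\<And>t. t \<le> m \<Longrightarrow> \<bar>F t\<bar> < e" using B_C_tails[OF F] by metis
    show "eventually (\<lambda>x. \<forall>t\<in>{c..d}. \<bar>F (x - t)\<bar> \<le> e) at_bot"
      using eventually_le_at_bot[of "m + c"] by eventually_elim (auto intro!: less_imp_le[OF m])
  qed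
qed

lemma conv_C0bar:
  assumes F: "F \<in> B_C" and g: "g \<in> BV"
  shows "conv F g \<in> C0bar"
proof -
  have eq: "conv F g = (\<lambda>x. at_pinf F * at_minf g + conv_integral F g x)"
    using conv_eq[OF F g] by blast
  have "continuous_on UNIV (conv F g)"
    unfolding eq by (intro continuous_intros uniformly_continuous_imp_continuous
        conv_integral_uniformly_continuous[OF F g])
  moreover have "(conv F g \<longlongrightarrow> at_pinf F * at_minf g + at_pinf F * (at_pinf g - at_minf g)) at_top"
    unfolding eq by (intro tendsto_intros conv_integral_tendsto_pinf[OF F g])
  moreover have "(conv F g \<longlongrightarrow> at_pinf F * at_minf g + 0) at_bot"
    unfolding eq by (intro tendsto_intros conv_integral_tendsto_minf[OF F g])
  ultimately show ?thesis unfolding C0bar_def by blast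
qed

lemma conv_bound:
  assumes F: "F \<in> B_C" and g: "g \<in> BV"
  shows "\<bar>conv F g x\<bar> \<le> alex F * bvnorm g"
proof -
  have "\<bar>conv_integral F g x\<bar> \<le> alex F * variation g"
    unfolding conv_integral_def
    by (rule hs_integral_bound[OF continuous_reflect[OF B_C_props(1)[OF F]] alex_pt[OF F] g])
  moreover have "\<bar>at_pinf F * at_minf g\<bar> \<le> alex F * \<bar>at_minf g\<bar>"
    unfolding abs_mult by (rule mult_right_mono[OF alex_pinf[OF F]]) simp
  ultimately show ?thesis
    unfolding conv_eq[OF F g] bvnorm_def by (simp add: algebra_simps)
qed

lemma supnorm_le: "(\<And>x. \<bar>h x\<bar> \<le> c) \<Longrightarrow> supnorm h \<le> c"
  unfolding supnorm_def by (rule cSup_least) auto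

lemma supnorm_conv: "F \<in> B_C \<Longrightarrow> g \<in> BV \<Longrightarrow> supnorm (conv F g) \<le> alex F * bvnorm g"
  by (rule supnorm_le) (rule conv_bound)

lemma BV_lin:
  assumes g: "g \<in> BV" and h: "h \<in> BV"
  shows "(\<lambda>y. \<alpha> * g y + \<beta> * h y) \<in> BV"
proof -
  have "s \<le> \<bar>\<alpha>\<bar> * variation g + \<bar>\<beta>\<bar> * variation h"
    if sums: "s \<in> var_sums (\<lambda>y. \<alpha> * g y + \<beta> * h y)" for s
  proof -
    obtain n :: nat and x y where
      s: "s = (\<Sum>i<n. \<bar>(\<alpha> * g (x i) + \<beta> * h (x i)) - (\<alpha> * g (y i) + \<beta> * h (y i))\<bar>)"
      and P: "(\<forall>i<n. x i < y i) \<and> (\<forall>i<n. \<forall>j<n. i \<noteq> j \<longrightarrow> {x i<..<y i} \<inter> {x j<..<y j} = {})"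
      using sums unfolding var_sums_def by blast
    have "(\<Sum>i<n. \<bar>g (x i) - g (y i)\<bar>) \<in> var_sums g" "(\<Sum>i<n. \<bar>h (x i) - h (y i)\<bar>) \<in> var_sums h"
      unfolding var_sums_def using P by blast+
    then have V: "(\<Sum>i<n. \<bar>g (x i) - g (y i)\<bar>) \<le> variation g" "(\<Sum>i<n. \<bar>h (x i) - h (y i)\<bar>) \<le> variation h"
      using variation_upper g h by blast+
    have "s \<le> (\<Sum>i<n. \<bar>\<alpha>\<bar> * \<bar>g (x i) - g (y i)\<bar> + \<bar>\<beta>\<bar> * \<bar>h (x i) - h (y i)\<bar>)"
      unfolding s
    proof (rule sum_mono)
      fix i
      have "\<bar>\<alpha> * (g (x i) - g (y i)) + \<beta> * (h (x i) - h (y i))\<bar>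
          \<le> \<bar>\<alpha>\<bar> * \<bar>g (x i) - g (y i)\<bar> + \<bar>\<beta>\<bar> * \<bar>h (x i) - h (y i)\<bar>"
        by (metis abs_mult abs_triangle_ineq)
      then show "\<bar>(\<alpha> * g (x i) + \<beta> * h (x i)) - (\<alpha> * g (y i) + \<beta> * h (y i))\<bar>
          \<le> \<bar>\<alpha>\<bar> * \<bar>g (x i) - g (y i)\<bar> + \<bar>\<beta>\<bar> * \<bar>h (x i) - h (y i)\<bar>"
        by (simp add: algebra_simps)
    qed
    also have "\<dots> = \<bar>\<alpha>\<bar> * (\<Sum>i<n. \<bar>g (x i) - g (y i)\<bar>) + \<bar>\<beta>\<bar> * (\<Sum>i<n. \<bar>h (x i) - h (y i)\<bar>)"
      by (simp add: sum.distrib sum_distrib_left)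
    also have "\<dots> \<le> \<bar>\<alpha>\<bar> * variation g + \<bar>\<beta>\<bar> * variation h"
      using V by (intro add_mono mult_left_mono) auto
    finally show ?thesis .
  qed
  then show ?thesis unfolding BV_def bdd_above_def by blast
qed

lemma conv_lin_g:
  assumes F: "F \<in> B_C" and g: "g \<in> BV" and h: "h \<in> BV"
  shows "conv F (\<lambda>y. a * g y + b * h y) = (\<lambda>x. a * conv F g x + b * conv F h x)"
proof
  fix x
  obtain B where B: "\<And>t. \<bar>F t\<bar> \<le> B" using B_C_bounded[OF F] by blast
  note cont = continuous_reflect[OF B_C_props(1)[OF F]]
  have gh: "(\<lambda>y. a * g y + b * h y) \<in> BV" by (rule BV_lin[OF g h])
  have "conv_integral F (\<lambda>y. a * g y + b * h y) x = a * conv_integral F g x + b * conv_integral F h x"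
    unfolding conv_integral_def
    by (rule hs_integral_lin[OF cont B g cont B h cont gh stieltjes_sum_lin_g])
  moreover have "at_minf (\<lambda>y. a * g y + b * h y) = a * at_minf g + b * at_minf h"
    by (rule lim_at_minf) (intro tendsto_intros BV_tendsto_minf g h)
  ultimately show "conv F (\<lambda>y. a * g y + b * h y) x = a * conv F g x + b * conv F h x"
    unfolding conv_eq[OF F gh] conv_eq[OF F g] conv_eq[OF F h] by (simp add: algebra_simps)
qed

lemma conv_lin_F:
  assumes F: "F \<in> B_C" and G: "G \<in> B_C" and g: "g \<in> BV"
  shows "conv (\<lambda>y. a * F y + b * G y) g = (\<lambda>x. a * conv F g x + b * conv G g x)"
proof
  fix x
  obtain B1 where B1: "\<And>t. \<bar>F t\<bar> \<le> B1" using B_C_bounded[OF F] by blast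
  obtain B2 where B2: "\<And>t. \<bar>G t\<bar> \<le> B2" using B_C_bounded[OF G] by blast
  note FG = B_C_lin[OF F G, of a b]
  have "conv_integral (\<lambda>y. a * F y + b * G y) g x = a * conv_integral F g x + b * conv_integral G g x"
    unfolding conv_integral_def
    by (rule hs_integral_lin_H[OF continuous_reflect[OF B_C_props(1)[OF F]] B1
          continuous_reflect[OF B_C_props(1)[OF G]] B2 g])
  then show "conv (\<lambda>y. a * F y + b * G y) g x = a * conv F g x + b * conv G g x"
    unfolding conv_eq[OF FG(1) g] conv_eq[OF F g] conv_eq[OF G g] FG(2) by (simp add: algebra_simps)
qed

lemma var_sums_const: "var_sums (\<lambda>_. c) = {0}"
  using var_sums_zero[of "\<lambda>_. c"] unfolding var_sums_def by auto

lemma const_BV: "(\<lambda>_. c) \<in> BV"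
  by (simp add: BV_def var_sums_const)

lemma const_bvnorm: "bvnorm (\<lambda>_. c) = \<bar>c\<bar>"
  unfolding bvnorm_def variation_def var_sums_const lim_at_minf[OF tendsto_const] by simp

lemma conv_const:
  assumes F: "F \<in> B_C"
  shows "conv F (\<lambda>_. c) = (\<lambda>_. at_pinf F * c)"
proof
  fix x
  obtain B where B: "\<And>t. \<bar>F t\<bar> \<le> B" using B_C_bounded[OF F] by blast
  have "\<bar>conv_integral F (\<lambda>_. c) x\<bar> \<le> B * variation (\<lambda>_. c)"
    unfolding conv_integral_def
    by (rule hs_integral_bound[OF continuous_reflect[OF B_C_props(1)[OF F]] B const_BV])
  then show "conv F (\<lambda>_. c) x = at_pinf F * c"
    unfolding conv_eq[OF F const_BV] lim_at_minf[OF tendsto_const] by (simp add: variation_def var_sums_const)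
qed

lemma supnorm_const: "supnorm (\<lambda>_. c) = \<bar>c\<bar>"
  unfolding supnorm_def by simp

text \<open>The ramp \<open>F = max 0 (min 1 \<cdot>)\<close>, primitive of the indicator of \<open>[0, 1]\<close>, has
  \<open>F(\<infinity>) = \<parallel>f\<parallel> = 1\<close>.\<close>
definition ramp :: "real \<Rightarrow> real" where "ramp x = max 0 (min 1 x)"

lemma ramp_eventually: "eventually (\<lambda>x. ramp x = 1) at_top" "eventually (\<lambda>x. ramp x = 0) at_bot"
  unfolding eventually_at_top_linorder eventually_at_bot_linorder ramp_def
  by (rule exI[of _ 1], simp) (rule exI[of _ 0], simp)

lemma ramp_B_C: "ramp \<in> B_C"
proof -
  have "continuous_on UNIV ramp" unfolding ramp_def by (intro continuous_intros)
  then show ?thesis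
    unfolding B_C_def using tendsto_eventually[OF ramp_eventually(1)] tendsto_eventually[OF ramp_eventually(2)]
    by blast
qed

lemma ramp_pinf: "at_pinf ramp = 1"
  by (rule lim_at_pinf[OF tendsto_eventually[OF ramp_eventually(1)]])

text \<open>Its Alexiewicz norm is its total rise \<open>ramp 1 - ramp 0 = 1\<close>.\<close>
lemma ramp_alex: "alex ramp = 1"
proof (rule antisym)
  show "alex ramp \<le> 1"
    unfolding alex_def by (rule cSup_least) (auto simp: ramp_def abs_le_iff)
  have "\<bar>ramp 1 - ramp 0\<bar> \<le> alex ramp" by (rule alex_upper[OF ramp_B_C])
  then show "1 \<le> alex ramp" by (simp add: ramp_def)
qed

lemma ramp_nonzero: "ramp \<noteq> (\<lambda>_. 0)"
proof -
  have "ramp 1 \<noteq> 0" by (simp add: ramp_def)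
  then show ?thesis by (metis)
qed

lemma opnorm_Phi_le:
  assumes F: "F \<in> B_C"
  shows "bdd_above {supnorm (conv F g) | g. g \<in> BV \<and> bvnorm g \<le> 1}" "opnorm_Phi F \<le> alex F"
proof -
  have le: "s \<le> alex F" if s: "s \<in> {supnorm (conv F g) | g. g \<in> BV \<and> bvnorm g \<le> 1}" for s
  proof -
    obtain g where g: "s = supnorm (conv F g)" "g \<in> BV" "bvnorm g \<le> 1" using s by blast
    have "0 \<le> alex F" using alex_pt[OF F, of 0] by linarith
    then have "alex F * bvnorm g \<le> alex F" using mult_left_mono[OF g(3)] by simp
    then show ?thesis using supnorm_conv[OF F g(2)] g(1) by linarith
  qed
  then show "bdd_above {supnorm (conv F g) | g. g \<in> BV \<and> bvnorm g \<le> 1}" by (rule bdd_aboveI)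
  have "supnorm (conv F (\<lambda>_. 0)) \<in> {supnorm (conv F g) | g. g \<in> BV \<and> bvnorm g \<le> 1}"
    using const_BV const_bvnorm by fastforce
  then show "opnorm_Phi F \<le> alex F" unfolding opnorm_Phi_def by (blast intro: cSup_least le)
qed

lemma opnorm_Psi_le:
  assumes g: "g \<in> BV"
  shows "bdd_above {supnorm (conv F g) | F. F \<in> B_C \<and> alex F \<le> 1}" "opnorm_Psi g \<le> bvnorm g"
proof -
  have le: "s \<le> bvnorm g" if s: "s \<in> {supnorm (conv F g) | F. F \<in> B_C \<and> alex F \<le> 1}" for s
  proof -
    obtain F where F: "s = supnorm (conv F g)" "F \<in> B_C" "alex F \<le> 1" using s by blast
    have "0 \<le> bvnorm g" unfolding bvnorm_def using variation_nonneg[OF g] by simp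
    then have "alex F * bvnorm g \<le> bvnorm g" using mult_right_mono[OF F(3)] by simp
    then show ?thesis using supnorm_conv[OF F(2) g] F(1) by linarith
  qed
  then show "bdd_above {supnorm (conv F g) | F. F \<in> B_C \<and> alex F \<le> 1}" by (rule bdd_aboveI)
  have "ramp \<in> B_C \<and> alex ramp \<le> 1" using ramp_B_C ramp_alex by simp
  then have "supnorm (conv ramp g) \<in> {supnorm (conv F g) | F. F \<in> B_C \<and> alex F \<le> 1}" by blast
  then show "opnorm_Psi g \<le> bvnorm g" unfolding opnorm_Psi_def by (blast intro: cSup_least le)
qed

lemma supnorm_conv_ramp_one: "supnorm (conv ramp (\<lambda>_. 1)) = 1"
  unfolding conv_const[OF ramp_B_C] ramp_pinf supnorm_const by simp

lemma opnorm_Phi_ramp: "opnorm_Phi ramp = alex ramp"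
proof -
  have "1 \<in> {supnorm (conv ramp g) | g. g \<in> BV \<and> bvnorm g \<le> 1}"
    using supnorm_conv_ramp_one const_BV const_bvnorm[of 1] by fastforce
  then have "1 \<le> opnorm_Phi ramp"
    unfolding opnorm_Phi_def by (rule cSup_upper[OF _ opnorm_Phi_le(1)[OF ramp_B_C]])
  then show ?thesis using opnorm_Phi_le(2)[OF ramp_B_C] ramp_alex by simp
qed

lemma opnorm_Psi_one: "opnorm_Psi (\<lambda>_. 1) = bvnorm (\<lambda>_. 1)"
proof -
  have "1 \<in> {supnorm (conv F (\<lambda>_. 1)) | F. F \<in> B_C \<and> alex F \<le> 1}"
    using supnorm_conv_ramp_one ramp_B_C ramp_alex by fastforce
  then have "1 \<le> opnorm_Psi (\<lambda>_. 1)"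
    unfolding opnorm_Psi_def by (rule cSup_upper[OF _ opnorm_Psi_le(1)[OF const_BV]])
  then show ?thesis using opnorm_Psi_le(2)[OF const_BV, of 1] const_bvnorm[of 1] by simp
qed

theorem theorem2p1:
  shows
  "(\<forall>F\<in>B_C.
      (\<forall>g\<in>BV. conv F g \<in> C0bar) \<and>
      (\<forall>g\<in>BV. \<forall>h\<in>BV. \<forall>a b::real.
          conv F (\<lambda>y. a * g y + b * h y) = (\<lambda>x. a * conv F g x + b * conv F h x)) \<and>
      (\<forall>g\<in>BV. supnorm (conv F g) \<le> alex F * bvnorm g) \<and>
      opnorm_Phi F \<le> alex F)
   \<and> (\<exists>F\<in>B_C. F \<noteq> (\<lambda>_. 0) \<and> opnorm_Phi F = alex F)
   \<and> (\<forall>g\<in>BV.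
      (\<forall>F\<in>B_C. conv F g \<in> C0bar) \<and>
      (\<forall>F\<in>B_C. \<forall>G\<in>B_C. \<forall>a b::real.
          conv (\<lambda>y. a * F y + b * G y) g = (\<lambda>x. a * conv F g x + b * conv G g x)) \<and>
      (\<forall>F\<in>B_C. supnorm (conv F g) \<le> alex F * bvnorm g) \<and>
      opnorm_Psi g \<le> bvnorm g)
   \<and> (\<exists>g\<in>BV. g \<noteq> (\<lambda>_. 0) \<and> opnorm_Psi g = bvnorm g)"
proof (intro conjI)
  show "\<forall>F\<in>B_C.
      (\<forall>g\<in>BV. conv F g \<in> C0bar) \<and>
      (\<forall>g\<in>BV. \<forall>h\<in>BV. \<forall>a b::real.
          conv F (\<lambda>y. a * g y + b * h y) = (\<lambda>x. a * conv F g x + b * conv F h x)) \<and>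
      (\<forall>g\<in>BV. supnorm (conv F g) \<le> alex F * bvnorm g) \<and>
      opnorm_Phi F \<le> alex F"
    using conv_C0bar conv_lin_g supnorm_conv opnorm_Phi_le(2) by blast
  show "\<exists>F\<in>B_C. F \<noteq> (\<lambda>_. 0) \<and> opnorm_Phi F = alex F"
    using ramp_B_C ramp_nonzero opnorm_Phi_ramp by blast
  show "\<forall>g\<in>BV.
      (\<forall>F\<in>B_C. conv F g \<in> C0bar) \<and>
      (\<forall>F\<in>B_C. \<forall>G\<in>B_C. \<forall>a b::real.
          conv (\<lambda>y. a * F y + b * G y) g = (\<lambda>x. a * conv F g x + b * conv G g x)) \<and>
      (\<forall>F\<in>B_C. supnorm (conv F g) \<le> alex F * bvnorm g) \<and>
      opnorm_Psi g \<le> bvnorm g"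
    using conv_C0bar conv_lin_F supnorm_conv opnorm_Psi_le(2) by blast
  show "\<exists>g\<in>BV. g \<noteq> (\<lambda>_. 0) \<and> opnorm_Psi g = bvnorm g"
    using const_BV opnorm_Psi_one by (metis zero_neq_one)
qed

end
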